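(* Let $K$ be a non-Archimedean locally compact field of characteristic $p>0$, and let $U=1+M_K$ be its group of 1-units. Let $\Lambda$ be the set of maps $f:U\to U$ that are locally analytic on $U$ and satisfy $f(uv)=f(u)f(v)$ for all $u,v\in U$; it is a group under pointwise multiplication. Then the map $(\mathbb{Z}_p,+)\to(\Lambda,\cdot)$, $y\mapsto (u\mapsto u^y)$, is an isomorphism of groups. In particular $(\Lambda,\cdot)\cong(\mathbb{Z}_p,+)$.
   Context: $K$ has ring of integers $R_K$ with maximal ideal $M_K$, constant field $\mathbb{F}$ of order $q$, and a uniformizer $\pi$, so $K=\mathbb{F}((\pi))$ and $U=1+\pi\mathbb{F}[[\pi]]$. The absolute value is $|x|=q^{-v(x)}$. For $\alpha\in R_K$ and $t>0$, $B_{\alpha,t}=\{u\in R_K: |u-\alpha|\le t\}$. A continuous function $f$ on a ball $B_{\alpha,t}$ with $t=|\rho|$ ($\rho\in R_K$) is analytic there if $f(u)=\sum_{n\ge0}c_n\left(\frac{u-\alpha}{\rho}\right)^n$ with $c_n\in K$, $c_n\to0$. A continuous function $f:U\to K$ is locally analytic if every $\alpha\in U$ has a ball $B_{\alpha,t_\alpha}\subset U$ ($t_\alpha>0$) on which $f$ is analytic. For $y\in\mathbb{Z}_p$ and $u=1+x\in U$, $u^y=\sum_{n\ge0}\binom{y}{n}x^n$ (the natural $\mathbb{Z}_p$-module structure on $U$). *)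

theory Defs
  imports "HOL-Computational_Algebra.Formal_Laurent_Series" "HOL-Algebra.Group"
begin

(* K = F((pi)) is modelled as the Laurent series 'a fls over a finite field 'a.
   The valuation is fls_subdegree; |x| <= q^(-N) iff  vge x N. *)
definition vge :: "'a::field fls \<Rightarrow> int \<Rightarrow> bool" where
  "vge x N \<longleftrightarrow> x = 0 \<or> N \<le> fls_subdegree x"

definition RK :: "'a::field fls set" where "RK = {x. vge x 0}"
definition MK :: "'a::field fls set" where "MK = {x. vge x 1}"
definition Uone :: "'a::field fls set" where "Uone = {u. u - 1 \<in> MK}"

definition tends0 :: "(nat \<Rightarrow> 'a::field fls) \<Rightarrow> bool" where
  "tends0 c \<longleftrightarrow> (\<forall>N. \<exists>M. \<forall>n\<ge>M. vge (c n) N)"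

definition series_conv :: "(nat \<Rightarrow> 'a::field fls) \<Rightarrow> 'a fls \<Rightarrow> bool" where
  "series_conv w s \<longleftrightarrow> (\<forall>N. \<exists>M. \<forall>m\<ge>M. vge ((\<Sum>n<m. w n) - s) N)"

definition cont_on_K :: "'a::field fls set \<Rightarrow> ('a fls \<Rightarrow> 'a fls) \<Rightarrow> bool" where
  "cont_on_K S f \<longleftrightarrow>
     (\<forall>x\<in>S. \<forall>N. \<exists>M. \<forall>y\<in>S. vge (y - x) M \<longrightarrow> vge (f y - f x) N)"

definition ballK :: "'a::field fls \<Rightarrow> 'a fls \<Rightarrow> 'a fls set" where
  "ballK \<alpha> \<rho> = {u \<in> RK. vge (u - \<alpha>) (fls_subdegree \<rho>)}"

definition analytic_on_ball :: "('a::field fls \<Rightarrow> 'a fls) \<Rightarrow> 'a fls \<Rightarrow> 'a fls \<Rightarrow> bool" where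
  "analytic_on_ball f \<alpha> \<rho> \<longleftrightarrow>
     (\<exists>c. tends0 c \<and> (\<forall>u\<in>ballK \<alpha> \<rho>. series_conv (\<lambda>n. c n * ((u - \<alpha>) / \<rho>) ^ n) (f u)))"

definition locally_analytic_U :: "('a::field fls \<Rightarrow> 'a fls) \<Rightarrow> bool" where
  "locally_analytic_U f \<longleftrightarrow> cont_on_K Uone f \<and>
     (\<forall>\<alpha>\<in>Uone. \<exists>\<rho>. \<rho> \<in> RK \<and> \<rho> \<noteq> 0 \<and> ballK \<alpha> \<rho> \<subseteq> Uone \<and> analytic_on_ball f \<alpha> \<rho>)"

definition Lambda_set :: "('a::field fls \<Rightarrow> 'a fls) set" where
  "Lambda_set = {f \<in> extensional Uone. f \<in> Uone \<rightarrow> Uone \<and> locally_analytic_U f \<and>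
                  (\<forall>u\<in>Uone. \<forall>v\<in>Uone. f (u * v) = f u * f v)}"

definition Lambda_grp :: "('a::field fls \<Rightarrow> 'a fls) monoid" where
  "Lambda_grp = \<lparr>carrier = Lambda_set,
                  mult = (\<lambda>f g. restrict (\<lambda>u. f u * g u) Uone),
                  one = restrict (\<lambda>u. 1) Uone\<rparr>"

(* Z_p as compatible sequences of residues y n \<in> {0..<p^n} *)
definition Zp :: "nat \<Rightarrow> (nat \<Rightarrow> int) set" where
  "Zp p = {y. \<forall>n. 0 \<le> y n \<and> y n < int p ^ n \<and> y (Suc n) mod (int p ^ n) = y n}"

definition Zp_grp :: "nat \<Rightarrow> (nat \<Rightarrow> int) monoid" where
  "Zp_grp p = \<lparr>carrier = Zp p,
               mult = (\<lambda>y z. \<lambda>n. (y n + z n) mod (int p ^ n)),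
               one = (\<lambda>n. 0)\<rparr>"

(* image in F_p \<subseteq> K of binom(y,n) \<in> Z_p: since p^(n+1) > n, binom(y,n) \<equiv> binom(y_(n+1),n) mod p *)
definition zp_binom :: "nat \<Rightarrow> (nat \<Rightarrow> int) \<Rightarrow> nat \<Rightarrow> 'a::field fls" where
  "zp_binom p y n = of_nat (nat (y (Suc n)) choose n)"

definition upow :: "nat \<Rightarrow> (nat \<Rightarrow> int) \<Rightarrow> 'a::field fls \<Rightarrow> 'a fls" where
  "upow p y u = (THE s. series_conv (\<lambda>n. zp_binom p y n * (u - 1) ^ n) s)"

end

theory Submission
  imports Defs
begin

(* The map y |-> (u |-> u^y) is a homomorphism because u^y agrees with the ordinary power
   u^(y_M) modulo pi^M, and it is injective because the powers (1 + pi)^k, 0 <= k < p^M, are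
   pairwise incongruent modulo pi^(p^M).

   For surjectivity, let f be in Lambda. Near 1 it is a power series f(1 + x) = sum c_n (x/rho)^n.
   Comparing f(u)^p = f(u^p), where the Frobenius acts on the left, shows that b_n = c_n / rho^n
   satisfies b_n^p = b_n, so every b_n lies in F_p. The functional equation f(uv) = f(u) f(v)
   then forces (n + 1) b_(n+1) = (b_1 - n) b_n, hence F(x) = sum b_n x^n factors as
   (1 + x)^(y_0) G(x^p), where y_0 < p is the digit of b_1 and G is of the same kind. Iterating
   yields the p-adic digits of some y in Z_p with f(u) = u^y near 1, and then on all of U,
   because u |-> u^(p^k) is injective and maps U into any neighbourhood of 1. *)

section \<open>Valuation estimates\<close>

lemma vge_iff: "vge (x::'a::field fls) N \<longleftrightarrow> (\<forall>k<N. fls_nth x k = 0)"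
  unfolding vge_def using fls_subdegree_geI by (cases "x = 0") auto

lemma vge_0 [simp]: "vge 0 N"
  by (simp add: vge_def)

lemma vge_mono: "vge x N \<Longrightarrow> M \<le> N \<Longrightarrow> vge x M"
  by (auto simp: vge_def)

lemma vge_add: "vge (x::'a::field fls) N \<Longrightarrow> vge y N \<Longrightarrow> vge (x + y) N"
  by (simp add: vge_iff)

lemma vge_uminus [simp]: "vge (- (x::'a::field fls)) N \<longleftrightarrow> vge x N"
  by (simp add: vge_iff)

lemma vge_diff: "vge (x::'a::field fls) N \<Longrightarrow> vge y N \<Longrightarrow> vge (x - y) N"
  by (simp add: vge_iff)

lemma vge_diff_commute: "vge ((x::'a::field fls) - y) N \<longleftrightarrow> vge (y - x) N"
  by (metis minus_diff_eq vge_uminus)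

lemma vge_diff_trans: "vge ((x::'a::field fls) - y) N \<Longrightarrow> vge (y - z) N \<Longrightarrow> vge (x - z) N"
  using vge_add[of "x - y" N "y - z"] by simp

lemma vge_sum: "(\<And>i. i \<in> A \<Longrightarrow> vge (f i :: 'a::field fls) N) \<Longrightarrow> vge (sum f A) N"
  by (induction A rule: infinite_finite_induct) (auto intro: vge_add)

lemma vge_mult: "vge (x::'a::field fls) A \<Longrightarrow> vge y B \<Longrightarrow> vge (x * y) (A + B)"
  by (cases "x = 0"; cases "y = 0") (auto simp: vge_def)

lemma vge_mult_left0: "vge (x::'a::field fls) 0 \<Longrightarrow> vge y B \<Longrightarrow> vge (x * y) B"
  using vge_mult[of x 0 y B] by simp

lemma vge_mult_right0: "vge (x::'a::field fls) B \<Longrightarrow> vge y 0 \<Longrightarrow> vge (x * y) B"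
  using vge_mult[of x B y 0] by simp

lemma vge_power: "vge (x::'a::field fls) A \<Longrightarrow> vge (x ^ n) (int n * A)"
proof (induction n)
  case (Suc n)
  from vge_mult[OF Suc.prems Suc.IH[OF Suc.prems]] show ?case
    by (simp add: algebra_simps)
qed (simp add: vge_def)

lemma vge_power0: "vge (x::'a::field fls) 0 \<Longrightarrow> vge (x ^ n) 0"
  using vge_power[of x 0 n] by simp

lemma vge_power1: "vge (x::'a::field fls) 1 \<Longrightarrow> vge (x ^ n) (int n)"
  using vge_power[of x 1 n] by simp

lemma vge_of_nat [simp]: "vge (of_nat k :: 'a::field fls) 0"
  and vge_one [simp]: "vge (1 :: 'a::field fls) 0"
  and vge_X [simp]: "vge (fls_X :: 'a::field fls) 1"
  and vge_X_power [simp]: "vge (fls_X ^ n :: 'a::field fls) (int n)"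
  by (simp_all add: vge_def)

lemma eq_if_vge_diff: "(\<And>N. vge ((x::'a::field fls) - y) (int N)) \<Longrightarrow> x = y"
proof (rule ccontr)
  assume H: "\<And>N. vge (x - y) (int N)" and "x \<noteq> y"
  hence "int (nat (fls_subdegree (x - y) + 1)) \<le> fls_subdegree (x - y)"
    using H[of "nat (fls_subdegree (x - y) + 1)"] by (simp add: vge_def)
  thus False by linarith
qed

lemma vge_cancel: "(a::'a::field fls) \<noteq> 0 \<Longrightarrow> vge (a * y) N \<Longrightarrow> vge y (N - fls_subdegree a)"
  by (cases "y = 0") (auto simp: vge_def)

lemma vge_cancel_X_power: "vge (fls_X ^ k * y :: 'a::field fls) N \<Longrightarrow> vge y (N - int k)"
  using vge_cancel[of "fls_X ^ k" y N] by simp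


lemma vge_mult_diff:
  assumes "vge ((A::'a::field fls) - a) N" "vge (B - b) N" "vge A 0" "vge b 0"
  shows "vge (A * B - a * b) N"
proof -
  have "A * B - a * b = A * (B - b) + (A - a) * b" by (simp add: algebra_simps)
  thus ?thesis using assms vge_mult_left0 vge_mult_right0 vge_add by metis
qed

lemma vge_power_diff:
  assumes "vge ((u::'a::field fls) - v) N" "vge u 0" "vge v 0" shows "vge (u ^ n - v ^ n) N"
  by (induction n) (simp_all add: vge_mult_diff[OF assms(1) _ assms(2) vge_power0[OF assms(3)]])

lemma sum_tail_vge:
  fixes w :: "nat \<Rightarrow> 'a::field fls"
  assumes "\<And>n. n \<ge> m \<Longrightarrow> vge (w n) N" "m \<le> m'"
  shows "vge (sum w {..<m'} - sum w {..<m}) N"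
proof -
  have "sum w {..<m'} = sum w {..<m} + sum w {m..<m'}"
    using assms(2) sum.atLeastLessThan_concat[of 0 m m' w] by (simp add: atLeast0LessThan)
  moreover have "vge (sum w {m..<m'}) N" by (rule vge_sum) (use assms in auto)
  ultimately show ?thesis by simp
qed

section \<open>One-units\<close>

lemma Uone_iff: "u \<in> Uone \<longleftrightarrow> vge ((u::'a::field fls) - 1) 1"
  by (simp add: Uone_def MK_def)

lemma RK_iff: "u \<in> RK \<longleftrightarrow> vge (u::'a::field fls) 0"
  by (simp add: RK_def)

lemma one_unit_vge0: "vge ((u::'a::field fls) - 1) 1 \<Longrightarrow> vge u 0"
  using vge_add[of "u - 1" 0 1] vge_mono[of "u - 1" 1 0] by simp

lemma one_unit_subdegree:
  assumes "vge ((u::'a::field fls) - 1) 1" shows "u \<noteq> 0" "fls_subdegree u = 0"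
proof -
  have u0: "fls_nth u 0 = 1" using assms by (simp add: vge_iff)
  thus "u \<noteq> 0" by auto
  with one_unit_vge0[OF assms] have "0 \<le> fls_subdegree u" by (simp add: vge_def)
  moreover have "fls_subdegree u \<le> 0" using u0 by (intro fls_subdegree_leI) simp
  ultimately show "fls_subdegree u = 0" by simp
qed

lemma vge_mult_one_unit_cancel:
  "vge ((a::'a::field fls) - 1) 1 \<Longrightarrow> vge (a * y) N \<Longrightarrow> vge y N"
  using vge_cancel[of a y N] one_unit_subdegree[of a] by simp

lemma vge_divide_one_unit:
  assumes "vge (x::'a::field fls) N" "vge (a - 1) 1" shows "vge (x / a) N"
  using assms one_unit_subdegree[OF assms(2)] by (cases "x = 0") (auto simp: vge_def divide_inverse)

lemma one_unit_mult:
  assumes "vge ((u::'a::field fls) - 1) 1" "vge (v - 1) 1" shows "vge (u * v - 1) 1"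
proof -
  have "u * v - 1 = (u - 1) * (v - 1) + (u - 1) + (v - 1)" by (simp add: algebra_simps)
  moreover have "vge ((u - 1) * (v - 1)) 1" using vge_mult[OF assms] vge_mono by fastforce
  ultimately show ?thesis using assms vge_add by metis
qed

lemma one_unit_power: "vge ((u::'a::field fls) - 1) 1 \<Longrightarrow> vge (u ^ n - 1) 1"
  by (induction n) (auto intro: one_unit_mult[of u])

lemma fls_nth_one_plus_X_power:
  "fls_nth ((1 + fls_X) ^ m :: 'a::field fls) (int n) = of_nat (m choose n)"
proof -
  have "(1 + fls_X) ^ m = (\<Sum>i\<le>m. of_nat (m choose i) * (fls_X :: 'a fls) ^ i)"
    using binomial_ring[of "fls_X :: 'a fls" 1 m] by (simp add: add.commute)
  hence "fls_nth ((1 + fls_X) ^ m :: 'a fls) (int n) = (\<Sum>i\<le>m. of_nat (m choose i) * (if int n = int i then 1 else 0))"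
    by (simp add: fls_nth_sum fls_of_nat)
  also have "\<dots> = (\<Sum>i\<le>m. if i = n then of_nat (m choose i) else 0)"
    by (intro sum.cong) auto
  finally show ?thesis by (simp add: binomial_eq_0)
qed

lemma one_plus_power_binomial_trunc:
  assumes x: "vge (x::'a::field fls) 1"
  shows "vge ((1 + x) ^ m - (\<Sum>n<N. of_nat (m choose n) * x ^ n)) (int N)"
proof -
  have "(1 + x) ^ m = (\<Sum>n\<le>m. of_nat (m choose n) * x ^ n)"
    using binomial_ring[of x 1 m] by (simp add: add.commute)
  also have "\<dots> = (\<Sum>n<m + N + 1. of_nat (m choose n) * x ^ n)"
    by (rule sum.mono_neutral_left) (auto simp: binomial_eq_0)
  finally show ?thesis
    by (simp only:) (rule sum_tail_vge, auto intro!: vge_mult_left0 vge_mono[OF vge_power1[OF x]])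
qed

section \<open>Convergent series\<close>

lemma series_conv_unique:
  assumes "series_conv w (s::'a::field fls)" "series_conv w t" shows "s = t"
proof (rule eq_if_vge_diff)
  fix N
  obtain M1 where "\<forall>m\<ge>M1. vge (sum w {..<m} - s) (int N)" using assms(1) unfolding series_conv_def by blast
  moreover obtain M2 where "\<forall>m\<ge>M2. vge (sum w {..<m} - t) (int N)" using assms(2) unfolding series_conv_def by blast
  ultimately have "vge (s - sum w {..<max M1 M2}) (int N)" "vge (sum w {..<max M1 M2} - t) (int N)"
    using vge_diff_commute by (metis max.cobounded1, metis max.cobounded2)
  thus "vge (s - t) (int N)" by (rule vge_diff_trans)
qed

lemma series_conv_mult_left:
  assumes "series_conv w (s::'a::field fls)" shows "series_conv (\<lambda>n. a * w n) (a * s)"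
  unfolding series_conv_def
proof
  fix N
  obtain M where M: "\<forall>m\<ge>M. vge (sum w {..<m} - s) (N - fls_subdegree a)"
    using assms unfolding series_conv_def by blast
  have "vge (sum (\<lambda>n. a * w n) {..<m} - a * s) N" if "m \<ge> M" for m
  proof (cases "a = 0")
    case False
    have "vge (a * (sum w {..<m} - s)) (fls_subdegree a + (N - fls_subdegree a))"
      using M that by (intro vge_mult) (auto simp: vge_def)
    thus ?thesis by (simp add: sum_distrib_left algebra_simps)
  qed simp
  thus "\<exists>M. \<forall>m\<ge>M. vge (sum (\<lambda>n. a * w n) {..<m} - a * s) N" by blast
qed

lemma series_conv_diff:
  assumes "series_conv w (s::'a::field fls)" "series_conv v t"
  shows "series_conv (\<lambda>n. w n - v n) (s - t)"
  unfolding series_conv_def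
proof
  fix N
  obtain M1 where M1: "\<forall>m\<ge>M1. vge (sum w {..<m} - s) N" using assms(1) unfolding series_conv_def by blast
  obtain M2 where M2: "\<forall>m\<ge>M2. vge (sum v {..<m} - t) N" using assms(2) unfolding series_conv_def by blast
  have "vge (sum (\<lambda>n. w n - v n) {..<m} - (s - t)) N" if "max M1 M2 \<le> m" for m
    using vge_diff[of "sum w {..<m} - s" N "sum v {..<m} - t"] M1 M2 that
    by (simp add: sum_subtractf algebra_simps)
  thus "\<exists>M. \<forall>m\<ge>M. vge (sum (\<lambda>n. w n - v n) {..<m} - (s - t)) N" by blast
qed

lemma series_conv_iff_trunc:
  assumes W: "\<And>n. vge (w n :: 'a::field fls) (int n)"
  shows "series_conv w s \<longleftrightarrow> (\<forall>N. vge (sum w {..<N} - s) (int N))"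
proof
  assume C: "series_conv w s"
  show "\<forall>N. vge (sum w {..<N} - s) (int N)"
  proof
    fix N
    obtain M where M: "\<forall>m\<ge>M. vge (sum w {..<m} - s) (int N)" using C unfolding series_conv_def by blast
    have "vge (sum w {..<max M N} - sum w {..<N}) (int N)"
      by (rule sum_tail_vge) (auto intro: vge_mono[OF W])
    with M show "vge (sum w {..<N} - s) (int N)"
      using vge_diff_commute vge_diff_trans by (metis max.cobounded1)
  qed
next
  assume H: "\<forall>N. vge (sum w {..<N} - s) (int N)"
  have "vge (sum w {..<m} - s) N" if "nat N \<le> m" for N m
    using vge_mono[OF H[rule_format, of m]] that by simp
  thus "series_conv w s" unfolding series_conv_def by blast
qed

lemma tends0_if_vge_index: "(\<And>n. vge (w n :: 'a::field fls) (int n)) \<Longrightarrow> tends0 w"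
  unfolding tends0_def using vge_mono by (metis nat_le_iff)

lemma series_conv_exists:
  assumes W: "\<And>n. vge (w n :: 'a::field fls) (int n)" shows "\<exists>s. series_conv w s"
proof -
  define S where "S m = sum w {..<m}" for m
  have S0: "vge (S m) 0" for m unfolding S_def by (rule vge_sum) (use W vge_mono of_nat_0_le_iff in blast)
  define g where "g k = fls_nth (S (nat k + 1)) k" for k
  have stable: "fls_nth (S m) k = g k" if "nat k + 1 \<le> m" for m k
  proof -
    have "vge (S m - S (nat k + 1)) (int (nat k + 1))"
      unfolding S_def by (rule sum_tail_vge) (use that in \<open>auto intro: vge_mono[OF W]\<close>)
    thus ?thesis unfolding g_def vge_iff by fastforce
  qed
  have g_neg: "g k = 0" if "k < 0" for k using S0 that by (simp add: g_def vge_iff)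
  define s where "s = Abs_fls g"
  have "\<forall>\<^sub>\<infinity> n. g (- int n) = 0" unfolding MOST_nat using g_neg by (intro exI[of _ 0]) simp
  hence s: "fls_nth s = g" unfolding s_def by (simp add: Abs_fls_inverse)
  have "vge (S N - s) (int N)" for N
  proof -
    have "fls_nth (S N) k = g k" if "k < int N" for k
      using that S0 g_neg stable[of k N] by (cases "k < 0") (auto simp: vge_iff)
    thus ?thesis by (simp add: vge_iff s)
  qed
  thus ?thesis using series_conv_iff_trunc[OF W] unfolding S_def by blast
qed

definition psum :: "(nat \<Rightarrow> 'a::field fls) \<Rightarrow> 'a fls \<Rightarrow> 'a fls" where
  "psum b x = (THE s. series_conv (\<lambda>n. b n * x ^ n) s)"

lemma psum_eqI: "series_conv (\<lambda>n. b n * x ^ n) s \<Longrightarrow> psum b x = s"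
  unfolding psum_def using series_conv_unique by blast

context
  fixes b :: "nat \<Rightarrow> 'a::field fls" and x :: "'a fls"
  assumes coeffs: "\<And>n. vge (b n) 0" and x: "vge x 1"
begin

lemma vge_psum_term: "vge (b n * x ^ n) (int n)"
  by (rule vge_mult_left0[OF coeffs vge_power1[OF x]])

lemma psum_series_conv: "series_conv (\<lambda>n. b n * x ^ n) (psum b x)"
  using series_conv_exists[OF vge_psum_term] psum_eqI by blast

lemma psum_trunc: "vge ((\<Sum>n<N. b n * x ^ n) - psum b x) (int N)"
  using psum_series_conv series_conv_iff_trunc[OF vge_psum_term] by blast

lemma psum_eqI_trunc: "(\<And>N. vge ((\<Sum>n<N. b n * x ^ n) - s) (int N)) \<Longrightarrow> psum b x = s"
  using psum_eqI series_conv_iff_trunc[OF vge_psum_term] by blast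

lemma psum_vge0: "vge (psum b x) 0"
  using psum_trunc[of 0] by simp

end

section \<open>Characteristic \<open>p\<close>\<close>

locale char_p =
  fixes p :: nat and field_type :: "'a::field itself"
  assumes prime_p: "prime p" and of_nat_p_eq_0: "of_nat p = (0::'a)"
begin

lemma p_pos: "p > 0"
  using prime_p prime_gt_0_nat by blast

lemma p_ge_2: "p \<ge> 2"
  using prime_p prime_ge_2_nat by blast

lemma CHAR_eq: "CHAR('a) = p"
proof -
  have "CHAR('a) dvd p" using of_nat_p_eq_0 by (simp add: of_nat_eq_0_iff_char_dvd)
  moreover have "CHAR('a) \<noteq> 1" by simp
  ultimately show ?thesis using prime_p by (metis prime_nat_iff)
qed

lemma of_nat_fls_eq_0_iff: "(of_nat n :: 'a fls) = 0 \<longleftrightarrow> p dvd n"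
  using of_nat_eq_0_iff_char_dvd[of n, where 'a = 'a] CHAR_eq by (simp add: fls_of_nat)

lemma CHAR_fls: "CHAR('a fls) = p"
  by (rule CHAR_eqI) (auto simp: of_nat_fls_eq_0_iff)

lemma frobenius_power_add: "((x::'a fls) + y) ^ (p ^ k) = x ^ (p ^ k) + y ^ (p ^ k)"
  using freshmans_dream'[of "p ^ k" k x y] CHAR_fls prime_p by simp

lemma frobenius_power_diff: "((x::'a fls) - y) ^ (p ^ k) = x ^ (p ^ k) - y ^ (p ^ k)"
  using frobenius_power_add[of "x - y" y k] by (simp add: algebra_simps)

lemma frobenius_add: "((x::'a fls) + y) ^ p = x ^ p + y ^ p"
  using frobenius_power_add[of x y 1] by simp

lemma frobenius_diff: "((x::'a fls) - y) ^ p = x ^ p - y ^ p"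
  using frobenius_power_diff[of x y 1] by simp

lemma frobenius_sum: "(sum (f :: 'b \<Rightarrow> 'a fls) A) ^ p = (\<Sum>i\<in>A. f i ^ p)"
  by (rule freshmans_dream_sum) (simp_all add: CHAR_fls CHAR_eq prime_p)

lemma of_nat_fls_power_p: "(of_nat k :: 'a fls) ^ p = of_nat k"
  by (induction k) (simp_all add: frobenius_add p_pos add.commute[of 1])

lemma of_nat_fls_eq_iff: "i < p \<Longrightarrow> j < p \<Longrightarrow> (of_nat i :: 'a fls) = of_nat j \<longleftrightarrow> i = j"
proof (induction i j rule: linorder_wlog)
  case (le i j)
  have "(of_nat j :: 'a fls) - of_nat i = of_nat (j - i)" using le by (simp add: of_nat_diff)
  moreover have "p dvd (j - i) \<longleftrightarrow> i = j" using le by (auto dest: dvd_imp_le)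
  ultimately show ?case by (metis eq_iff_diff_eq_0 of_nat_fls_eq_0_iff)
qed (simp add: eq_commute)

lemma less_p_power: "n < p ^ n"
  using less_exp[of n] power_mono[OF p_ge_2, of n] by linarith

lemma one_unit_power_p_power:
  assumes "vge ((u::'a fls) - 1) 1" shows "vge (u ^ (p ^ k) - 1) (int (p ^ k))"
  using vge_power1[OF assms, of "p ^ k"] frobenius_power_diff[of u 1 k] by simp

lemma one_unit_power_periodic:
  assumes u: "vge ((u::'a fls) - 1) 1" shows "vge (u ^ (a + p ^ k * c) - u ^ a) (int (p ^ k))"
proof -
  have u0: "vge u 0" "vge (u ^ (p ^ k)) 0" using one_unit_vge0 one_unit_power[OF u] u by blast+
  have "vge ((u ^ (p ^ k)) ^ c - 1 ^ c) (int (p ^ k))"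
    by (rule vge_power_diff[OF one_unit_power_p_power[OF u] u0(2)]) simp
  hence "vge (u ^ a * ((u ^ (p ^ k)) ^ c - 1)) (int (p ^ k))"
    using vge_mult_left0[OF vge_power0[OF u0(1)]] by simp
  thus ?thesis by (simp add: power_add power_mult right_diff_distrib)
qed

lemma binomial_periodic:
  assumes "n < p ^ k" shows "(of_nat ((a + p ^ k * c) choose n) :: 'a fls) = of_nat (a choose n)"
proof -
  have "vge ((1 + fls_X :: 'a fls) ^ (a + p ^ k * c) - (1 + fls_X) ^ a) (int (p ^ k))"
    by (rule one_unit_power_periodic) simp
  hence "fls_nth ((1 + fls_X :: 'a fls) ^ (a + p ^ k * c) - (1 + fls_X) ^ a) (int n) = 0"
    using assms by (simp add: vge_iff)
  thus ?thesis by (simp add: fls_nth_one_plus_X_power fls_of_nat)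
qed

end

section \<open>The \<open>p\<close>-adic integers\<close>

lemma Zp_nonneg: "y \<in> Zp p \<Longrightarrow> 0 \<le> y n"
  and Zp_less: "y \<in> Zp p \<Longrightarrow> y n < int p ^ n"
  unfolding Zp_def by simp_all

lemma Zp_mod: assumes "y \<in> Zp p" "n \<le> M" shows "y M mod int p ^ n = y n"
  using assms(2)
proof (induction M rule: dec_induct)
  case base thus ?case using Zp_nonneg[OF assms(1)] Zp_less[OF assms(1)] by simp
next
  case (step M)
  have "y (Suc M) mod int p ^ n = (y (Suc M) mod int p ^ M) mod int p ^ n"
    using step.hyps by (simp add: mod_mod_cancel le_imp_power_dvd)
  thus ?case using assms(1) step.IH unfolding Zp_def by simp
qed

lemma Zp_decomp:
  assumes "y \<in> Zp p" "n \<le> M" shows "\<exists>c. nat (y M) = nat (y n) + p ^ n * c"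
proof -
  have "y M = y n + int p ^ n * (y M div int p ^ n)"
    using Zp_mod[OF assms] mod_mult_div_eq[of "y M" "int p ^ n"] by simp
  moreover have "0 \<le> y M div int p ^ n" using Zp_nonneg[OF assms(1)] by (simp add: div_int_pos_iff)
  ultimately have "int (nat (y n) + p ^ n * nat (y M div int p ^ n)) = y M"
    using Zp_nonneg[OF assms(1), of n] by simp
  thus ?thesis by (metis nat_int)
qed

lemma mod_power_in_Zp:
  assumes "p > 0" "\<And>n. z (Suc n) mod int p ^ n = z n mod int p ^ n"
  shows "(\<lambda>n. z n mod int p ^ n) \<in> Zp p"
  unfolding Zp_def
proof (intro CollectI allI conjI)
  fix n
  show "0 \<le> z n mod int p ^ n" "z n mod int p ^ n < int p ^ n" using assms(1) by simp_all
  show "z (Suc n) mod int p ^ Suc n mod int p ^ n = z n mod int p ^ n"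
    using assms(2) by (simp add: mod_mod_cancel le_imp_power_dvd)
qed

lemma Zp_add_closed:
  assumes "p > 0" "y \<in> Zp p" "z \<in> Zp p" shows "(\<lambda>n. (y n + z n) mod int p ^ n) \<in> Zp p"
  by (rule mod_power_in_Zp[OF assms(1)])
    (use assms(2,3) in \<open>simp add: Zp_def mod_add_eq[of "y (Suc _)", symmetric]\<close>)

lemma Zp_uminus_closed:
  assumes "p > 0" "y \<in> Zp p" shows "(\<lambda>n. (- y n) mod int p ^ n) \<in> Zp p"
  by (rule mod_power_in_Zp[OF assms(1)])
    (use assms(2) in \<open>simp add: Zp_def mod_minus_eq[of "y (Suc _)", symmetric]\<close>)

lemma zero_in_Zp: "p > 0 \<Longrightarrow> (\<lambda>n. 0) \<in> Zp p"
  by (simp add: Zp_def)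

lemma Zp_group: assumes "p > 0" shows "group (Zp_grp p)"
proof (rule groupI)
  fix x assume "x \<in> carrier (Zp_grp p)"
  hence x: "x \<in> Zp p" by (simp add: Zp_grp_def)
  show "\<one>\<^bsub>Zp_grp p\<^esub> \<otimes>\<^bsub>Zp_grp p\<^esub> x = x"
    using Zp_nonneg[OF x] Zp_less[OF x] by (simp add: Zp_grp_def fun_eq_iff)
  have "(\<lambda>n. (- x n) mod int p ^ n) \<otimes>\<^bsub>Zp_grp p\<^esub> x = \<one>\<^bsub>Zp_grp p\<^esub>"
    by (simp add: Zp_grp_def fun_eq_iff mod_add_left_eq)
  thus "\<exists>y\<in>carrier (Zp_grp p). y \<otimes>\<^bsub>Zp_grp p\<^esub> x = \<one>\<^bsub>Zp_grp p\<^esub>"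
    using Zp_uminus_closed[OF assms x] by (auto simp: Zp_grp_def)
qed (use assms Zp_add_closed zero_in_Zp in
      \<open>simp_all add: Zp_grp_def fun_eq_iff mod_add_left_eq mod_add_right_eq add.assoc\<close>)

section \<open>The power maps \<open>u \<mapsto> u^y\<close>\<close>

context char_p
begin

lemma upow_eq_psum: "upow p y u = psum (zp_binom p y) (u - 1)"
  by (simp add: upow_def psum_def)

lemma vge_zp_binom: "vge (zp_binom p y n :: 'a fls) 0"
  by (simp add: zp_binom_def)

text \<open>For \<open>n < M\<close> the coefficient \<open>binom(y, n)\<close> equals \<open>binom(y\<^sub>M, n)\<close>, so the first \<open>M\<close> terms of
  the series are those of the binomial expansion of \<open>u^y\<^sub>M\<close>.\<close>

lemma upow_approx:
  assumes y: "y \<in> Zp p" and u: "vge ((u::'a fls) - 1) 1"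
  shows "vge (upow p y u - u ^ nat (y M)) (int M)"
proof -
  have "zp_binom p y n = (of_nat (nat (y M) choose n) :: 'a fls)" if n: "n < M" for n
  proof -
    obtain c where c: "nat (y M) = nat (y (Suc n)) + p ^ Suc n * c"
      using Zp_decomp[OF y, of "Suc n" M] n by auto
    have "n < p ^ Suc n" using less_p_power[of n] p_pos by (simp add: less_le_trans)
    from binomial_periodic[OF this] show ?thesis unfolding zp_binom_def c by simp
  qed
  hence "(\<Sum>n<M. zp_binom p y n * (u - 1) ^ n) = (\<Sum>n<M. of_nat (nat (y M) choose n) * (u - 1) ^ n)"
    by (intro sum.cong) auto
  moreover have "vge (u ^ nat (y M) - (\<Sum>n<M. of_nat (nat (y M) choose n) * (u - 1) ^ n)) (int M)"
    using one_plus_power_binomial_trunc[OF u] by simp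
  moreover have "vge ((\<Sum>n<M. zp_binom p y n * (u - 1) ^ n) - upow p y u) (int M)"
    unfolding upow_eq_psum by (rule psum_trunc[OF vge_zp_binom u])
  ultimately show ?thesis using vge_diff_trans vge_diff_commute by metis
qed

lemma upow_eqI:
  assumes y: "y \<in> Zp p" and u: "vge ((u::'a fls) - 1) 1"
    and s: "\<And>M. vge (s - u ^ nat (y M)) (int M)"
  shows "upow p y u = s"
  using upow_approx[OF y u] s vge_diff_commute vge_diff_trans by (metis eq_if_vge_diff)

lemma upow_one_unit:
  assumes y: "y \<in> Zp p" and u: "vge ((u::'a fls) - 1) 1" shows "vge (upow p y u - 1) 1"
  using vge_diff_trans[OF upow_approx[OF y u, of 1, simplified] one_unit_power[OF u]] .

lemma upow_vge0: "y \<in> Zp p \<Longrightarrow> vge ((u::'a fls) - 1) 1 \<Longrightarrow> vge (upow p y u) 0"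
  using upow_one_unit one_unit_vge0 by blast

lemma upow_mult:
  assumes y: "y \<in> Zp p" and u: "vge ((u::'a fls) - 1) 1" and v: "vge (v - 1) 1"
  shows "upow p y (u * v) = upow p y u * upow p y v"
proof (rule upow_eqI[OF y one_unit_mult[OF u v]])
  fix M
  have "vge (upow p y u * upow p y v - u ^ nat (y M) * v ^ nat (y M)) (int M)"
    by (rule vge_mult_diff[OF upow_approx[OF y u] upow_approx[OF y v] upow_vge0[OF y u]
          vge_power0[OF one_unit_vge0[OF v]]])
  thus "vge (upow p y u * upow p y v - (u * v) ^ nat (y M)) (int M)"
    by (simp add: power_mult_distrib)
qed

lemma upow_one: "y \<in> Zp p \<Longrightarrow> upow p y (1::'a fls) = 1"
  by (rule upow_eqI) simp_all

lemma upow_power: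
  assumes y: "y \<in> Zp p" and u: "vge ((u::'a fls) - 1) 1"
  shows "upow p y (u ^ n) = upow p y u ^ n"
  by (induction n) (simp_all add: upow_one[OF y] upow_mult[OF y u one_unit_power[OF u]])

lemma upow_zero: "vge ((u::'a fls) - 1) 1 \<Longrightarrow> upow p (\<lambda>n. 0) u = 1"
  by (rule upow_eqI[OF zero_in_Zp[OF p_pos]]) simp_all

lemma upow_add:
  assumes y: "y \<in> Zp p" and z: "z \<in> Zp p" and u: "vge ((u::'a fls) - 1) 1"
  shows "upow p (\<lambda>n. (y n + z n) mod int p ^ n) u = upow p y u * upow p z u"
proof (rule upow_eqI[OF Zp_add_closed[OF p_pos y z] u])
  fix M
  define k where "k = nat ((y M + z M) mod int p ^ M)"
  define c where "c = nat ((y M + z M) div int p ^ M)"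
  have "int (nat (y M) + nat (z M)) = int (k + p ^ M * c)"
    using Zp_nonneg[OF y, of M] Zp_nonneg[OF z, of M] p_pos mod_mult_div_eq[of "y M + z M" "int p ^ M"]
    unfolding k_def c_def by (simp add: div_int_pos_iff)
  hence kc: "nat (y M) + nat (z M) = k + p ^ M * c" by (metis nat_int)
  have "vge (upow p y u * upow p z u - u ^ nat (y M) * u ^ nat (z M)) (int M)"
    by (rule vge_mult_diff[OF upow_approx[OF y u] upow_approx[OF z u] upow_vge0[OF y u]
          vge_power0[OF one_unit_vge0[OF u]]])
  moreover have "vge (u ^ (k + p ^ M * c) - u ^ k) (int M)"
    using one_unit_power_periodic[OF u] less_p_power[of M] vge_mono by (metis less_imp_le of_nat_mono)
  ultimately show "vge (upow p y u * upow p z u - u ^ nat ((y M + z M) mod int p ^ M)) (int M)"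
    using vge_diff_trans kc k_def by (metis power_add)
qed

lemma upow_cont:
  assumes y: "y \<in> Zp p" and u: "vge ((u::'a fls) - 1) 1" and v: "vge (v - 1) 1"
    and uv: "vge (u - v) N"
  shows "vge (upow p y u - upow p y v) N"
proof -
  define M where "M = nat N"
  have "vge (u - v) (int M)"
    using uv vge_diff[OF one_unit_vge0[OF u] one_unit_vge0[OF v]] by (cases "N \<ge> 0") (simp_all add: M_def)
  hence "vge (u ^ nat (y M) - v ^ nat (y M)) (int M)"
    by (rule vge_power_diff[OF _ one_unit_vge0[OF u] one_unit_vge0[OF v]])
  hence "vge (upow p y u - upow p y v) (int M)"
    using upow_approx[OF y u] upow_approx[OF y v] vge_diff_trans vge_diff_commute by metis
  thus ?thesis using vge_mono M_def by fastforce
qed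

text \<open>Around a one-unit \<open>\<alpha>\<close> we expand \<open>u^y = \<alpha>^y (u/\<alpha>)^y\<close> as a binomial series in \<open>(u - \<alpha>)/\<alpha>\<close>.\<close>

lemma upow_analytic:
  assumes y: "y \<in> Zp p" and a: "vge ((\<alpha>::'a fls) - 1) 1"
  shows "analytic_on_ball (restrict (upow p y) Uone) \<alpha> fls_X"
  unfolding analytic_on_ball_def
proof (intro exI conjI ballI)
  define c where "c n = upow p y \<alpha> * zp_binom p y n * (fls_X / \<alpha>) ^ n" for n
  have "vge (c n) (int n)" for n unfolding c_def
    by (intro vge_mult_left0 vge_power1 upow_vge0[OF y a] vge_zp_binom vge_divide_one_unit[OF vge_X a])
  thus "tends0 c" by (rule tends0_if_vge_index)
  fix u assume "u \<in> ballK \<alpha> fls_X"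
  hence ua: "vge (u - \<alpha>) 1" unfolding ballK_def by simp
  hence u: "vge (u - 1) 1" using vge_add[OF ua a] by simp
  define w where "w = u / \<alpha>"
  have a0: "\<alpha> \<noteq> 0" using one_unit_subdegree(1)[OF a] .
  have w1: "w - 1 = (u - \<alpha>) / \<alpha>" using a0 unfolding w_def by (simp add: field_simps)
  have w: "vge (w - 1) 1" unfolding w1 by (rule vge_divide_one_unit[OF ua a])
  have "series_conv (\<lambda>n. upow p y \<alpha> * (zp_binom p y n * (w - 1) ^ n)) (upow p y \<alpha> * upow p y w)"
    unfolding upow_eq_psum by (rule series_conv_mult_left[OF psum_series_conv[OF vge_zp_binom w]])
  moreover have "upow p y \<alpha> * upow p y w = restrict (upow p y) Uone u"
    using upow_mult[OF y a w] a0 u unfolding w_def by (simp add: Uone_iff)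
  moreover have "upow p y \<alpha> * (zp_binom p y n * (w - 1) ^ n) = c n * ((u - \<alpha>) / fls_X) ^ n" for n
  proof -
    have "(fls_X / \<alpha>) * ((u - \<alpha>) / fls_X) = w - 1" unfolding w1
      by (simp only: times_divide_times_eq mult.commute[of fls_X])
        (rule nonzero_mult_divide_mult_cancel_right, simp)
    thus ?thesis unfolding c_def by (simp add: power_mult_distrib[symmetric] mult.assoc)
  qed
  ultimately show "series_conv (\<lambda>n. c n * ((u - \<alpha>) / fls_X) ^ n) (restrict (upow p y) Uone u)"
    by simp
qed

lemma upow_in_Lambda:
  assumes y: "y \<in> Zp p" shows "restrict (upow p y) Uone \<in> (Lambda_set :: ('a fls \<Rightarrow> 'a fls) set)"
  unfolding Lambda_set_def
proof (intro CollectI conjI)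
  show "restrict (upow p y) Uone \<in> (Uone :: 'a fls set) \<rightarrow> Uone"
    using upow_one_unit[OF y] by (auto simp: Uone_iff)
  show "\<forall>u\<in>(Uone :: 'a fls set). \<forall>v\<in>Uone.
          restrict (upow p y) Uone (u * v) = restrict (upow p y) Uone u * restrict (upow p y) Uone v"
    by (simp add: Uone_iff one_unit_mult upow_mult[OF y])
  have "cont_on_K Uone (restrict (upow p y) (Uone :: 'a fls set))"
    unfolding cont_on_K_def by (fastforce simp: Uone_iff intro!: upow_cont[OF y])
  moreover have "ballK \<alpha> fls_X \<subseteq> Uone" if "\<alpha> \<in> Uone" for \<alpha> :: "'a fls"
    using that vge_add[of _ 1 "\<alpha> - 1"] by (fastforce simp: ballK_def Uone_iff)
  moreover have "fls_X \<in> (RK :: 'a fls set)"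
    by (simp add: RK_iff vge_mono[OF vge_X])
  ultimately show "locally_analytic_U (restrict (upow p y) (Uone :: 'a fls set))"
    unfolding locally_analytic_U_def using upow_analytic[OF y] Uone_iff fls_X_nonzero by blast
qed simp

lemma upow_approx_p_power:
  assumes y: "y \<in> Zp p" and u: "vge ((u::'a fls) - 1) 1"
  shows "vge (upow p y u - u ^ nat (y M)) (int (p ^ M))"
proof -
  obtain c where c: "nat (y (p ^ M)) = nat (y M) + p ^ M * c"
    using Zp_decomp[OF y] less_p_power[of M] by (meson less_imp_le)
  have "vge (upow p y u - u ^ (nat (y M) + p ^ M * c)) (int (p ^ M))"
    using upow_approx[OF y u, of "p ^ M"] c by simp
  from vge_diff_trans[OF this one_unit_power_periodic[OF u]] show ?thesis .
qed

lemma one_plus_X_power_not_congruent_one: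
  "0 < D \<Longrightarrow> D < p ^ M \<Longrightarrow> \<not> vge ((1 + fls_X :: 'a fls) ^ D - 1) (int (p ^ M))"
proof (induction D arbitrary: M rule: less_induct)
  case (less D)
  show ?case
  proof (cases "p dvd D")
    case False
    have "fls_nth ((1 + fls_X :: 'a fls) ^ D - 1) 1 = of_nat D"
      using fls_nth_one_plus_X_power[of D 1] by simp
    moreover have "(of_nat D :: 'a) \<noteq> 0" using False CHAR_eq of_nat_eq_0_iff_char_dvd by metis
    moreover have "1 < int (p ^ M)" using less.prems by linarith
    ultimately show ?thesis unfolding vge_iff by force
  next
    case True
    then obtain D' where D': "D = p * D'" by blast
    with less.prems p_ge_2 obtain M' where M': "M = Suc M'" "0 < D'" "D' < D" "D' < p ^ M'"
      by (cases M) auto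
    define z where "z = (1 + fls_X :: 'a fls) ^ D' - 1"
    have "\<not> vge z (int (p ^ M'))" unfolding z_def using less.IH[OF M'(3,2,4)] .
    hence "z \<noteq> 0" "fls_subdegree z < int (p ^ M')" unfolding vge_def by auto
    hence "z ^ p \<noteq> 0" "fls_subdegree (z ^ p) < int (p ^ M)"
      using p_pos by (simp_all add: fls_subdegree_pow M'(1))
    moreover have "(1 + fls_X :: 'a fls) ^ D - 1 = z ^ p"
      unfolding z_def D' using frobenius_diff by (simp add: power_mult mult.commute)
    ultimately show ?thesis unfolding vge_def by auto
  qed
qed

lemma one_plus_X_power_inj_mod:
  assumes "A < p ^ M" "B < p ^ M" "vge ((1 + fls_X :: 'a fls) ^ A - (1 + fls_X) ^ B) (int (p ^ M))"
  shows "A = B"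
  using assms
proof (induction A B rule: linorder_wlog)
  case (le A B)
  define u where "u = (1 + fls_X :: 'a fls)"
  have "(1 + fls_X) ^ B - (1 + fls_X) ^ A = u ^ A * (u ^ (B - A) - 1)"
    using le by (simp add: u_def right_diff_distrib power_add[symmetric])
  hence "vge (u ^ A * (u ^ (B - A) - 1)) (int (p ^ M))" using le vge_diff_commute by metis
  moreover have "vge (u ^ A - 1) 1" by (rule one_unit_power) (simp add: u_def)
  ultimately have "vge (u ^ (B - A) - 1) (int (p ^ M))" using vge_mult_one_unit_cancel by blast
  thus "A = B" using one_plus_X_power_not_congruent_one[of "B - A" M] le unfolding u_def by linarith
qed (metis vge_diff_commute)

lemma upow_inj:
  assumes y: "y \<in> Zp p" and z: "z \<in> Zp p" and eq: "upow p y (1 + fls_X :: 'a fls) = upow p z (1 + fls_X)"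
  shows "y = z"
proof
  fix M
  have X: "vge ((1 + fls_X :: 'a fls) - 1) 1" by simp
  have "vge ((1 + fls_X :: 'a fls) ^ nat (y M) - (1 + fls_X) ^ nat (z M)) (int (p ^ M))"
    using upow_approx_p_power[OF y X, of M] upow_approx_p_power[OF z X, of M] eq
    by (metis vge_diff_commute vge_diff_trans)
  moreover have "nat (w M) < p ^ M" if "w \<in> Zp p" for w
    using Zp_less[OF that, of M] Zp_nonneg[OF that, of M] by (simp add: nat_less_iff)
  ultimately have "nat (y M) = nat (z M)" using one_plus_X_power_inj_mod y z by blast
  thus "y M = z M" using Zp_nonneg[OF y, of M] Zp_nonneg[OF z, of M] by simp
qed

end

section \<open>Identity theorem and formal derivatives\<close>

lemma tends0_bounded_below:
  assumes "tends0 (w :: nat \<Rightarrow> 'a::field fls)" shows "\<exists>L. \<forall>n. vge (w n) L"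
proof -
  obtain M where M: "\<forall>n\<ge>M. vge (w n) 0" using assms unfolding tends0_def by blast
  define L where "L = min 0 (Min ((\<lambda>n. fls_subdegree (w n)) ` {..<M}))"
  have "vge (w n) L" for n
  proof (cases "n < M")
    case True
    hence "L \<le> fls_subdegree (w n)" unfolding L_def by (simp add: min.coboundedI2)
    thus ?thesis by (auto simp: vge_def)
  qed (use M vge_mono[of "w _" 0 L] L_def in auto)
  thus ?thesis by blast
qed

lemma vge_lowest_term:
  fixes g :: "nat \<Rightarrow> 'a::field fls"
  assumes "n0 < m" "\<And>n. n < n0 \<Longrightarrow> g n = 0" "\<And>n. n0 < n \<Longrightarrow> vge (g n) N"
    and "vge (\<Sum>n<m. g n) N"
  shows "vge (g n0) N"
proof -
  have "(\<Sum>n<m. g n) = g n0 + (\<Sum>n\<in>{..<m} - {n0}. g n)"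
    using assms(1) by (simp add: sum.remove)
  moreover have "vge (\<Sum>n\<in>{..<m} - {n0}. g n) N"
    using assms(2,3) by (intro vge_sum) (metis DiffD2 insertI1 linorder_neqE_nat vge_0)
  ultimately show ?thesis using vge_diff[OF assms(4)] by fastforce
qed

text \<open>Once \<open>D\<close> is large, the lowest nonzero term dominates the sum.\<close>

lemma power_series_eq_0:
  fixes e :: "nat \<Rightarrow> 'a::field fls"
  assumes L: "\<And>n. vge (e n) L"
    and conv: "\<And>K. \<exists>D\<ge>K. series_conv (\<lambda>n. e n * (fls_X ^ D) ^ n) 0"
  shows "e n = 0"
proof (rule ccontr)
  assume "e n \<noteq> 0"
  define n0 where "n0 = (LEAST n. e n \<noteq> 0)"
  have e0: "e n0 \<noteq> 0" using \<open>e n \<noteq> 0\<close> unfolding n0_def by (rule LeastI)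
  have below: "e n = 0" if "n < n0" for n using not_less_Least[OF that[unfolded n0_def]] by blast
  define V where "V = fls_subdegree (e n0)"
  obtain D where D: "int D \<ge> V - L + 1" "series_conv (\<lambda>n. e n * (fls_X ^ D) ^ n) 0"
    using conv[of "nat (V - L + 1)"] by force
  define N where "N = V + int D * int n0 + 1"
  obtain M where "\<forall>m\<ge>M. vge (\<Sum>n<m. e n * (fls_X ^ D) ^ n) N"
    using D(2) unfolding series_conv_def by force
  hence "vge (\<Sum>n<max M (Suc n0). e n * (fls_X ^ D) ^ n) N" by simp
  hence "vge (e n0 * (fls_X ^ D) ^ n0) N"
  proof (rule vge_lowest_term[rotated 3])
    fix n assume "n0 < n"
    hence "int D * int n0 + int D \<le> int D * int n"
      using mult_left_mono[of "int n0 + 1" "int n" "int D"] by (simp add: algebra_simps)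
    hence "N \<le> L + int (D * n)" using D(1) by (simp add: N_def)
    moreover have "vge (e n * (fls_X ^ D) ^ n) (L + int (D * n))"
      by (rule vge_mult[OF L]) (metis power_mult vge_X_power)
    ultimately show "vge (e n * (fls_X ^ D) ^ n) N" by (rule vge_mono[rotated])
  qed (simp_all add: below)
  moreover have "fls_subdegree (e n0 * (fls_X ^ D) ^ n0) = V + int D * int n0"
    using e0 by (simp add: V_def fls_subdegree_pow flip: power_mult)
  ultimately show False using e0 unfolding N_def vge_def by auto
qed

lemma vge_power_add_taylor:
  assumes x: "vge (x::'a::field fls) 0" and h: "vge h v" and v: "v \<ge> 0"
  shows "vge ((x + h) ^ n - x ^ n - of_nat n * x ^ (n - 1) * h) (2 * v)"
proof (induction n)
  case (Suc n)
  define D where "D = of_nat n * x ^ (n - 1)"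
  have "x * D + x ^ n = of_nat (Suc n) * x ^ n"
    by (cases n) (simp_all add: D_def algebra_simps)
  hence "(x + h) ^ Suc n - x ^ Suc n - of_nat (Suc n) * x ^ (Suc n - 1) * h
        = (x + h) * ((x + h) ^ n - x ^ n - D * h) + D * (h * h)"
    by (simp add: algebra_simps)
  moreover have "vge ((x + h) * ((x + h) ^ n - x ^ n - D * h)) (2 * v)"
    using Suc.IH by (intro vge_mult_left0 vge_add[OF x vge_mono[OF h v]]) (simp add: D_def)
  moreover have "vge (D * (h * h)) (v + v)"
    unfolding D_def by (rule vge_mult_left0[OF vge_mult_left0[OF vge_of_nat vge_power0[OF x]] vge_mult[OF h h]])
  ultimately show ?case using vge_add by (metis mult_2)
qed simp

lemma power_sum_taylor1:
  assumes b: "\<And>n. vge (b n :: 'a::field fls) 0" and x: "vge x 0" and h: "vge h v" and v: "0 \<le> v"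
  shows "vge ((\<Sum>n<M. b n * (x + h) ^ n) - (\<Sum>n<M. b n * x ^ n)
              - h * (\<Sum>n<M. b n * (of_nat n * x ^ (n - 1)))) (2 * v)"
proof -
  have "(\<Sum>n<M. b n * (x + h) ^ n) - (\<Sum>n<M. b n * x ^ n) - h * (\<Sum>n<M. b n * (of_nat n * x ^ (n - 1)))
        = (\<Sum>n<M. b n * ((x + h) ^ n - x ^ n - of_nat n * x ^ (n - 1) * h))"
    by (simp add: sum_subtractf[symmetric] sum_distrib_left algebra_simps)
  moreover have "vge \<dots> (2 * v)"
    by (intro vge_sum vge_mult_left0[OF b] vge_power_add_taylor[OF x h v])
  ultimately show ?thesis by simp
qed

lemma power_sum_tail_vge:
  assumes a: "\<And>i. vge (a i :: 'a::field fls) 0" and x: "vge x 1" and "N \<le> K"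
  shows "vge ((\<Sum>i<K. a i * x ^ i) - (\<Sum>i<N. a i * x ^ i)) (int N)"
  by (rule sum_tail_vge[OF _ \<open>N \<le> K\<close>]) (meson vge_mono vge_mult_left0[OF a vge_power1[OF x]] of_nat_mono)

lemma psum_trunc_vge:
  assumes b: "\<And>n. vge (b n :: 'a::field fls) 0" and x: "vge x L" and L: "L \<ge> 1"
  shows "vge ((\<Sum>n<N. b n * x ^ n) - psum b x) (int N * L)"
proof -
  define K where "K = nat (int N * L)"
  have "int N \<le> int N * L" using mult_left_mono[OF L, of "int N"] by simp
  hence "N \<le> K" unfolding K_def by (simp add: le_nat_iff)
  have "vge ((\<Sum>n<K. b n * x ^ n) - (\<Sum>n<N. b n * x ^ n)) (int N * L)"
  proof (rule sum_tail_vge[OF _ \<open>N \<le> K\<close>])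
    fix n assume "N \<le> n"
    hence "int N * L \<le> 0 + int n * L" using L by (simp add: mult_right_mono)
    with vge_mult[OF b vge_power[OF x]] show "vge (b n * x ^ n) (int N * L)" by (rule vge_mono)
  qed
  moreover have "vge ((\<Sum>n<K. b n * x ^ n) - psum b x) (int N * L)"
    using psum_trunc[OF b vge_mono[OF x L], where N = K] L by (simp add: K_def)
  ultimately show ?thesis using vge_diff_trans[OF iffD1[OF vge_diff_commute]] by blast
qed

lemma psum_at_0: "psum b 0 = b 0"
proof (rule psum_eqI)
  have "(\<Sum>n<m. b n * 0 ^ n) = b 0" if "m \<ge> 1" for m
    using that by (induction m rule: dec_induct) simp_all
  thus "series_conv (\<lambda>n. b n * 0 ^ n) (b 0)" unfolding series_conv_def by (metis diff_self vge_0)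
qed

text \<open>Writing \<open>F\<close> for the series \<open>\<Sum> b\<^sub>n x\<^sup>n\<close>, comparing both sides of \<open>F((1 + x)(1 + z) - 1) = F(x) F(z)\<close>
  to first order in \<open>z = \<pi>^C\<close> yields the differential equation \<open>(1 + x) F'(x) = b\<^sub>1 F(x)\<close>, modulo \<open>\<pi>^N\<close>.\<close>

lemma psum_derivative_congruence:
  fixes b :: "nat \<Rightarrow> 'a::field fls"
  assumes b: "\<And>n. vge (b n) 0" and b0: "b 0 = 1" and x: "vge x 1" and C: "N < C"
    and FE: "psum b ((1 + x) * (1 + fls_X ^ C) - 1) = psum b x * psum b (fls_X ^ C)"
  shows "vge ((1 + x) * (\<Sum>n<C + N. b n * (of_nat n * x ^ (n - 1)))
              - b 1 * (\<Sum>n<C + N. b n * x ^ n)) (int N)"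
proof -
  define z where "z = (fls_X :: 'a fls) ^ C"
  define M where "M = C + N"
  define S where "S y = (\<Sum>n<M. b n * y ^ n)" for y
  define D where "D = (\<Sum>n<M. b n * (of_nat n * x ^ (n - 1)))"
  define w where "w = x + z * (1 + x)"
  have vz: "vge z (int C)" by (simp add: z_def)
  hence vz1: "vge z 1" by (rule vge_mono) (use C in simp)
  have vx0: "vge x 0" using vge_mono[OF x] by simp
  hence vx1: "vge (1 + x) 0" by (rule vge_add[OF vge_one])
  have vzx: "vge (z * (1 + x)) (int C)" by (rule vge_mult_right0[OF vz vx1])
  have vw: "vge w 1" unfolding w_def using vge_add[OF x vge_mono[OF vzx]] C by simp
  have M2C: "int M \<le> 2 * int C" using C by (simp add: M_def)
  have i1: "vge (S w - psum b w) (int M)" unfolding S_def by (rule psum_trunc[OF b vw])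
  have i2: "vge (S w - S x - z * (1 + x) * D) (int M)"
    unfolding S_def D_def w_def by (rule vge_mono[OF power_sum_taylor1[OF b vx0 vzx] M2C]) simp
  have i3: "vge (psum b x * psum b z - S x * (1 + b 1 * z)) (int M)"
  proof (rule vge_mult_diff)
    show "vge (psum b x - S x) (int M)"
      using psum_trunc[OF b x, where N = M] unfolding S_def by (rule iffD1[OF vge_diff_commute])
    have "vge ((\<Sum>n<2. b n * z ^ n) - psum b z) (int 2 * int C)"
      by (rule psum_trunc_vge[OF b vz]) (use C in simp)
    hence "vge ((1 + b 1 * z) - psum b z) (2 * int C)" by (simp add: numeral_2_eq_2 b0)
    hence "vge (psum b z - (1 + b 1 * z)) (2 * int C)" by (rule iffD1[OF vge_diff_commute])
    thus "vge (psum b z - (1 + b 1 * z)) (int M)" using M2C by (rule vge_mono)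
    have "vge (b 1 * z) 0" by (rule vge_mult_left0[OF b vge_mono[OF vz1]]) simp
    thus "vge (1 + b 1 * z) 0" by (rule vge_add[OF vge_one])
  qed (rule psum_vge0[OF b x])
  have "psum b w = psum b x * psum b z"
    using FE unfolding w_def z_def by (simp add: algebra_simps)
  hence "z * ((1 + x) * D - b 1 * S x)
         = (S w - psum b w) + (psum b x * psum b z - S x * (1 + b 1 * z)) - (S w - S x - z * (1 + x) * D)"
    by (simp add: algebra_simps)
  hence "vge (z * ((1 + x) * D - b 1 * S x)) (int M)"
    using vge_diff[OF vge_add[OF i1 i3] i2] by simp
  hence "vge ((1 + x) * D - b 1 * S x) (int M - int C)"
    unfolding z_def by (rule vge_cancel_X_power)
  thus ?thesis by (simp add: M_def S_def D_def)
qed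

lemma power_sum_derivative_equation_coeffs:
  fixes b :: "nat \<Rightarrow> 'a::field fls"
  assumes b: "\<And>n. vge (b n) 0" and x: "vge x 1" and NM: "N < M"
  shows "vge ((1 + x) * (\<Sum>n<M. b n * (of_nat n * x ^ (n - 1))) - b 1 * (\<Sum>n<M. b n * x ^ n)
              - (\<Sum>i<N. (of_nat (Suc i) * b (Suc i) - (b 1 - of_nat i) * b i) * x ^ i)) (int N)"
proof -
  obtain M' where M: "M = Suc M'" and NM': "N \<le> M'" using NM by (cases M) auto
  define a1 where "a1 i = of_nat (Suc i) * b (Suc i)" for i
  define a2 where "a2 i = of_nat i * b i - b 1 * b i" for i
  have va: "vge (a1 i) 0" "vge (a2 i) 0" for i
    unfolding a1_def a2_def by (intro vge_diff vge_mult_left0 vge_of_nat b)+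
  have D: "(\<Sum>n<M. b n * (of_nat n * x ^ (n - 1))) = (\<Sum>i<M'. a1 i * x ^ i)"
    unfolding M a1_def by (subst sum.lessThan_Suc_shift) (simp add: algebra_simps)
  have xD: "x * (\<Sum>n<M. b n * (of_nat n * x ^ (n - 1))) = (\<Sum>i<M. of_nat i * b i * x ^ i)"
    unfolding sum_distrib_left by (intro sum.cong refl) (case_tac xa, simp_all add: algebra_simps)
  have "(1 + x) * (\<Sum>n<M. b n * (of_nat n * x ^ (n - 1))) - b 1 * (\<Sum>n<M. b n * x ^ n)
        = (\<Sum>n<M. b n * (of_nat n * x ^ (n - 1)))
          + (x * (\<Sum>n<M. b n * (of_nat n * x ^ (n - 1))) - b 1 * (\<Sum>n<M. b n * x ^ n))"
    by (simp add: algebra_simps)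
  also have "x * (\<Sum>n<M. b n * (of_nat n * x ^ (n - 1))) - b 1 * (\<Sum>n<M. b n * x ^ n)
             = (\<Sum>i<M. a2 i * x ^ i)"
    unfolding xD a2_def by (simp add: sum_subtractf[symmetric] sum_distrib_left algebra_simps)
  finally have E: "(1 + x) * (\<Sum>n<M. b n * (of_nat n * x ^ (n - 1))) - b 1 * (\<Sum>n<M. b n * x ^ n)
                   = (\<Sum>i<M'. a1 i * x ^ i) + (\<Sum>i<M. a2 i * x ^ i)"
    unfolding D .
  have "(\<Sum>i<N. (of_nat (Suc i) * b (Suc i) - (b 1 - of_nat i) * b i) * x ^ i)
        = (\<Sum>i<N. a1 i * x ^ i) + (\<Sum>i<N. a2 i * x ^ i)"
    by (simp add: a1_def a2_def sum.distrib[symmetric] algebra_simps)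
  with E have "(1 + x) * (\<Sum>n<M. b n * (of_nat n * x ^ (n - 1))) - b 1 * (\<Sum>n<M. b n * x ^ n)
        - (\<Sum>i<N. (of_nat (Suc i) * b (Suc i) - (b 1 - of_nat i) * b i) * x ^ i)
        = ((\<Sum>i<M'. a1 i * x ^ i) - (\<Sum>i<N. a1 i * x ^ i))
          + ((\<Sum>i<M. a2 i * x ^ i) - (\<Sum>i<N. a2 i * x ^ i))"
    by simp
  moreover have "vge \<dots> (int N)"
    using NM' M by (intro vge_add power_sum_tail_vge[OF va(1) x] power_sum_tail_vge[OF va(2) x]) simp_all
  ultimately show ?thesis by simp
qed

text \<open>Only the test points \<open>x = \<pi>^(d a)\<close>, \<open>a \<ge> m\<close>, are required: this family is carried to
  itself by \<open>x \<mapsto> x^p\<close>, with \<open>d\<close> replaced by \<open>d p\<close>.\<close>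

definition psum_multiplicative :: "(nat \<Rightarrow> 'a::field fls) \<Rightarrow> nat \<Rightarrow> nat \<Rightarrow> bool" where
  "psum_multiplicative b d m \<longleftrightarrow>
     (\<forall>a\<ge>m. \<forall>c\<ge>m. psum b ((1 + fls_X ^ (d * a)) * (1 + fls_X ^ (d * c)) - 1)
                   = psum b (fls_X ^ (d * a)) * psum b (fls_X ^ (d * c)))"

lemma psum_multiplicative_coeff_recursion:
  fixes b :: "nat \<Rightarrow> 'a::field fls"
  assumes b: "\<And>n. vge (b n) 0" and b0: "b 0 = 1" and FE: "psum_multiplicative b d m" and d: "d \<ge> 1"
  shows "of_nat (Suc i) * b (Suc i) = (b 1 - of_nat i) * b i"
proof -
  define h where "h i = of_nat (Suc i) * b (Suc i) - (b 1 - of_nat i) * b i" for i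
  have vh: "vge (h i) 0" for i
    unfolding h_def by (intro vge_diff vge_mult_left0 vge_of_nat b)+
  have "h i = 0"
  proof (rule power_series_eq_0[OF vh])
    fix K
    define a where "a = max (max m K) 1"
    define x where "x = (fls_X :: 'a fls) ^ (d * a)"
    have "1 \<le> d * a" using d by (simp add: a_def)
    hence x: "vge x 1" unfolding x_def using vge_X_power vge_mono by (metis of_nat_mono of_nat_1)
    have "vge (\<Sum>i<N. h i * x ^ i) (int N)" for N
    proof -
      define C where "C = d * (m + N + 1)"
      have C: "N < C" using d mult_le_mono1[OF d, of "m + N + 1"] by (simp add: C_def)
      have "psum b ((1 + x) * (1 + fls_X ^ C) - 1) = psum b x * psum b (fls_X ^ C)"
        using FE[unfolded psum_multiplicative_def, rule_format, of a "m + N + 1"]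
        unfolding x_def C_def a_def by simp
      hence "vge ((1 + x) * (\<Sum>n<C + N. b n * (of_nat n * x ^ (n - 1)))
                  - b 1 * (\<Sum>n<C + N. b n * x ^ n)) (int N)"
        by (rule psum_derivative_congruence[where b = b, OF b b0 x C])
      moreover have "vge ((1 + x) * (\<Sum>n<C + N. b n * (of_nat n * x ^ (n - 1)))
                  - b 1 * (\<Sum>n<C + N. b n * x ^ n) - (\<Sum>i<N. h i * x ^ i)) (int N)"
        unfolding h_def by (rule power_sum_derivative_equation_coeffs[where b = b, OF b x]) (use C in simp)
      ultimately show ?thesis using vge_diff by fastforce
    qed
    hence "series_conv (\<lambda>i. h i * x ^ i) 0"
      using series_conv_iff_trunc[OF vge_mult_left0[OF vh vge_power1[OF x]]] by simp
    moreover have "K \<le> d * a" using d mult_le_mono1[OF d, of a] by (simp add: a_def)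
    ultimately show "\<exists>D\<ge>K. series_conv (\<lambda>n. h n * (fls_X ^ D) ^ n) 0" unfolding x_def by blast
  qed
  thus ?thesis by (simp add: h_def)
qed

lemma sum_lessThan_mult_regroup:
  fixes N k :: nat
  shows "(\<Sum>n<N * k. f n) = (\<Sum>q<N. \<Sum>r<k. (f (q * k + r) :: 'b::comm_monoid_add))"
proof (induction N)
  case (Suc N)
  have "(\<Sum>n<Suc N * k. f n) = (\<Sum>n<N * k. f n) + (\<Sum>n\<in>{N * k..<N * k + k}. f n)"
    using sum.atLeastLessThan_concat[of 0 "N * k" "N * k + k" f] by (simp add: atLeast0LessThan add.commute)
  moreover have "(\<Sum>n\<in>{N * k..<N * k + k}. f n) = (\<Sum>r<k. f (N * k + r))"
    using sum.shift_bounds_nat_ivl[of f 0 "N * k" k] by (simp add: atLeast0LessThan add.commute)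
  ultimately show ?case using Suc.IH by simp
qed simp

section \<open>Digits and the descent\<close>

context char_p
begin

definition Fp :: "'a fls set" where
  "Fp = of_nat ` {..<p}"

lemma Fp_vge0: "z \<in> Fp \<Longrightarrow> vge z 0"
  unfolding Fp_def by auto

lemma in_Fp_if_power_p_eq:
  assumes "(z::'a fls) ^ p = z" shows "z \<in> Fp"
proof (rule ccontr)
  assume z: "z \<notin> Fp"
  define P where "P = monom (1::'a fls) p + [:0, -1:]"
  have degP: "degree P = p"
    using p_ge_2 unfolding P_def by (subst degree_add_eq_left) (simp_all add: degree_monom_eq)
  hence P0: "P \<noteq> 0" using p_ge_2 by auto
  have "poly P w = w ^ p - w" for w unfolding P_def by (simp add: poly_monom)
  hence "insert z Fp \<subseteq> {w. poly P w = 0}"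
    using assms of_nat_fls_power_p by (auto simp: Fp_def)
  hence "card (insert z Fp) \<le> card {w. poly P w = 0}"
    by (intro card_mono) (auto intro: poly_roots_finite[OF P0])
  also have "\<dots> \<le> p" using card_poly_roots_bound[OF P0] degP by simp
  finally have "card (insert z Fp) \<le> p" .
  moreover have "card Fp = p"
    unfolding Fp_def by (subst card_image) (auto simp: inj_on_def of_nat_fls_eq_iff)
  ultimately show False using z by (simp add: Fp_def)
qed

definition digit :: "'a fls \<Rightarrow> nat" where
  "digit z = (THE j. j < p \<and> of_nat j = z)"

lemma digit: assumes "z \<in> Fp" shows "digit z < p \<and> of_nat (digit z) = z"
proof -
  obtain k where "k < p" "z = of_nat k" using assms by (auto simp: Fp_def)
  hence "\<exists>!j. j < p \<and> of_nat j = z" by (intro ex1I[of _ k]) (auto simp: of_nat_fls_eq_iff)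
  thus ?thesis unfolding digit_def by (rule theI')
qed

text \<open>The \<open>e\<close>-th digit is read off \<open>b(p^e)\<close>, which is the linear coefficient of the series reached
  after \<open>e\<close> steps of \<open>b \<mapsto> (\<lambda>q. b (q p))\<close>.\<close>

definition digit_exponent :: "(nat \<Rightarrow> 'a fls) \<Rightarrow> nat \<Rightarrow> nat" where
  "digit_exponent b k = (\<Sum>e<k. digit (b (p ^ e)) * p ^ e)"

lemma digit_exponent_Suc:
  "digit_exponent b (Suc k) = digit (b 1) + p * digit_exponent (\<lambda>q. b (q * p)) k"
  unfolding digit_exponent_def sum.lessThan_Suc_shift sum_distrib_left
  by (simp add: power_Suc2 mult_ac)

lemma digit_exponent_in_Zp:
  assumes "\<And>n. b n \<in> Fp" shows "(\<lambda>k. int (digit_exponent b k)) \<in> Zp p"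
proof -
  have less: "digit_exponent b k < p ^ k" for k
  proof (induction k)
    case (Suc k)
    have "digit (b (p ^ k)) \<le> p - 1" using digit[OF assms, of "p ^ k"] by linarith
    hence "digit (b (p ^ k)) * p ^ k \<le> (p - 1) * p ^ k" by (rule mult_le_mono1)
    moreover have "p ^ k + (p - 1) * p ^ k = p ^ Suc k" using p_pos by (cases p) auto
    moreover have "digit_exponent b (Suc k) = digit_exponent b k + digit (b (p ^ k)) * p ^ k"
      by (simp add: digit_exponent_def)
    ultimately show ?case using Suc.IH by linarith
  qed (simp add: digit_exponent_def)
  have "digit_exponent b (Suc k) mod p ^ k = digit_exponent b k" for k
    using less[of k] by (simp add: digit_exponent_def)
  thus ?thesis using less unfolding Zp_def by (simp flip: of_nat_power of_nat_mod)
qed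

lemma coeff_digit_structure:
  assumes rec: "\<And>i. of_nat (Suc i) * b (Suc i) = (b 1 - of_nat i) * (b i :: 'a fls)"
    and y0: "b 1 = of_nat y0" and r: "r < p"
  shows "b (q * p + r) = b (q * p) * of_nat (y0 choose r)"
  using r
proof (induction r)
  case (Suc r)
  have "(of_nat p :: 'a fls) = 0" using of_nat_fls_eq_0_iff by simp
  hence "of_nat (Suc r) * b (q * p + Suc r) = (of_nat y0 - of_nat r) * b (q * p + r)"
    using rec[of "q * p + r"] y0 by simp
  also have "\<dots> = b (q * p) * ((of_nat y0 - of_nat r) * of_nat (y0 choose r))"
    using Suc by simp
  also have "(of_nat y0 - of_nat r) * of_nat (y0 choose r) = (of_nat (Suc r) * of_nat (y0 choose Suc r) :: 'a fls)"
  proof (cases "r \<le> y0")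
    case True
    hence "(y0 - r) * (y0 choose r) = Suc r * (y0 choose Suc r)"
      using binomial_absorption[of r y0] binomial_absorb_comp[of y0 r] by simp
    thus ?thesis using True by (metis of_nat_diff of_nat_mult)
  qed (simp add: binomial_eq_0)
  finally have "of_nat (Suc r) * b (q * p + Suc r) = of_nat (Suc r) * (b (q * p) * of_nat (y0 choose Suc r))"
    by (simp add: ac_simps)
  moreover have "\<not> p dvd Suc r" using Suc.prems by (auto dest: dvd_imp_le)
  hence "(of_nat (Suc r) :: 'a fls) \<noteq> 0" using of_nat_fls_eq_0_iff by blast
  ultimately show ?case by simp
qed simp

lemma power_sum_digit_regroup:
  assumes dg: "\<And>q r. r < p \<Longrightarrow> b (q * p + r) = b (q * p) * of_nat (y0 choose r)" and y0: "y0 < p"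
  shows "(\<Sum>n<N * p. b n * x ^ n) = (1 + x) ^ y0 * (\<Sum>q<N. b (q * p) * (x ^ p :: 'a fls) ^ q)"
proof -
  have "(1 + x) ^ y0 = (\<Sum>r\<le>y0. of_nat (y0 choose r) * x ^ r)"
    using binomial_ring[of x 1 y0] by (simp add: add.commute)
  also have "\<dots> = (\<Sum>r<p. of_nat (y0 choose r) * x ^ r)"
    by (rule sum.mono_neutral_left) (use y0 in \<open>auto simp: binomial_eq_0\<close>)
  finally have P: "(1 + x) ^ y0 = (\<Sum>r<p. of_nat (y0 choose r) * x ^ r)" .
  have "(\<Sum>n<N * p. b n * x ^ n) = (\<Sum>q<N. \<Sum>r<p. b (q * p + r) * x ^ (q * p + r))"
    by (rule sum_lessThan_mult_regroup)
  also have "\<dots> = (\<Sum>q<N. b (q * p) * (x ^ p) ^ q * (1 + x) ^ y0)"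
    unfolding P sum_distrib_left
  proof (intro sum.cong refl)
    fix q r assume "r \<in> {..<p}"
    hence "b (q * p + r) = b (q * p) * of_nat (y0 choose r)" using dg by simp
    moreover have "x ^ (q * p + r) = (x ^ p) ^ q * x ^ r" by (metis power_add power_mult mult.commute)
    ultimately show "b (q * p + r) * x ^ (q * p + r) = b (q * p) * (x ^ p) ^ q * (of_nat (y0 choose r) * x ^ r)"
      by (simp only: mult_ac)
  qed
  finally show ?thesis by (simp add: sum_distrib_left mult.commute)
qed

lemma psum_digit_factor:
  assumes b: "\<And>n. vge (b n) 0"
    and dg: "\<And>q r. r < p \<Longrightarrow> b (q * p + r) = b (q * p) * of_nat (y0 choose r)"
    and y0: "y0 < p" and x: "vge (x::'a fls) 1"
  shows "psum b x = (1 + x) ^ y0 * psum (\<lambda>q. b (q * p)) (x ^ p)"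
proof (rule psum_eqI_trunc[OF b x])
  fix N
  define P where "P = (1 + x) ^ y0"
  define G where "G = psum (\<lambda>q. b (q * p)) (x ^ p)"
  have vP: "vge P 0" unfolding P_def using vge_mono[OF x] by (intro vge_power0 vge_add) simp_all
  have xp: "vge (x ^ p) 1" by (rule vge_mono[OF vge_power1[OF x]]) (use p_pos in simp)
  have V: "vge (P * ((\<Sum>q<N. b (q * p) * (x ^ p) ^ q) - G)
             - ((\<Sum>n<N * p. b n * x ^ n) - (\<Sum>n<N. b n * x ^ n))) (int N)"
    unfolding G_def using p_pos
    by (intro vge_diff vge_mult_left0[OF vP psum_trunc[OF b xp]] power_sum_tail_vge[OF b x]) simp
  have eq: "(\<Sum>n<N. b n * x ^ n) - P * G = P * ((\<Sum>q<N. b (q * p) * (x ^ p) ^ q) - G)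
      - ((\<Sum>n<N * p. b n * x ^ n) - (\<Sum>n<N. b n * x ^ n))"
    using power_sum_digit_regroup[OF dg y0, where N = N and x = x] unfolding P_def by (simp add: algebra_simps)
  show "vge ((\<Sum>n<N. b n * x ^ n) - P * G) (int N)" unfolding eq by (rule V)
qed

lemma psum_multiplicative_digit_step:
  fixes b :: "nat \<Rightarrow> 'a fls"
  assumes b: "\<And>n. vge (b n) 0"
    and dg: "\<And>q r. r < p \<Longrightarrow> b (q * p + r) = b (q * p) * of_nat (y0 choose r)"
    and y0: "y0 < p" and FE: "psum_multiplicative b d m" and d: "1 \<le> d" and m: "1 \<le> m"
  shows "psum_multiplicative (\<lambda>q. b (q * p)) (d * p) m"
  unfolding psum_multiplicative_def
proof (intro allI impI)
  fix a c assume a: "a \<ge> m" and c: "c \<ge> m"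
  define x where "x = (fls_X :: 'a fls) ^ (d * a)"
  define z where "z = (fls_X :: 'a fls) ^ (d * c)"
  define w where "w = (1 + x) * (1 + z) - 1"
  define G where "G = psum (\<lambda>q. b (q * p))"
  have "1 \<le> d * a" "1 \<le> d * c" using a c m d by (simp_all add: Suc_le_eq)
  hence x: "vge x 1" and z: "vge z 1" unfolding x_def z_def using vge_X_power vge_mono
    by (metis of_nat_mono of_nat_1)+
  have w: "vge w 1" using one_unit_mult[of "1 + x" "1 + z"] x z by (simp add: w_def)
  have wp: "w ^ p = (1 + x ^ p) * (1 + z ^ p) - 1"
    unfolding w_def by (simp add: frobenius_diff frobenius_add power_mult_distrib)
  have "((1 + x) * (1 + z)) ^ y0 * G (w ^ p) = psum b w"
    using psum_digit_factor[OF b dg y0 w] by (simp add: w_def G_def)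
  also have "\<dots> = psum b x * psum b z"
    using FE a c unfolding psum_multiplicative_def w_def x_def z_def by blast
  also have "\<dots> = ((1 + x) * (1 + z)) ^ y0 * (G (x ^ p) * G (z ^ p))"
    using psum_digit_factor[OF b dg y0 x] psum_digit_factor[OF b dg y0 z]
    by (simp add: G_def power_mult_distrib ac_simps)
  finally have "G (w ^ p) = G (x ^ p) * G (z ^ p)"
    using one_unit_subdegree(1)[OF one_unit_mult[of "1 + x" "1 + z"]] x z by simp
  moreover have "x ^ p = fls_X ^ (d * p * a)" "z ^ p = fls_X ^ (d * p * c)"
    unfolding x_def z_def by (simp_all flip: power_mult add: ac_simps)
  ultimately show "psum (\<lambda>q. b (q * p)) ((1 + fls_X ^ (d * p * a)) * (1 + fls_X ^ (d * p * c)) - 1)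
      = psum (\<lambda>q. b (q * p)) (fls_X ^ (d * p * a)) * psum (\<lambda>q. b (q * p)) (fls_X ^ (d * p * c))"
    using wp by (simp add: G_def)
qed

lemma psum_descent:
  assumes m: "1 \<le> m" and "\<And>n. b n \<in> Fp" "b 0 = 1" "psum_multiplicative b d m" "1 \<le> d"
    and "1 \<le> L" "vge (x::'a fls) L"
  shows "vge (psum b x - (1 + x) ^ digit_exponent b k) (int (p ^ k) * L)"
  using assms(2-)
proof (induction k arbitrary: b d x L)
  case 0
  have "vge ((\<Sum>n<1. b n * x ^ n) - psum b x) (int 1 * L)"
    using psum_trunc_vge[OF Fp_vge0[OF "0.prems"(1)] "0.prems"(6,5)] .
  hence "vge (1 - psum b x) L" using "0.prems"(2) by simp
  hence "vge (psum b x - 1) L" by (rule iffD1[OF vge_diff_commute])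
  thus ?case by (simp add: digit_exponent_def)
next
  case (Suc k)
  have b: "vge (b n) 0" for n using Fp_vge0[OF Suc.prems(1)] .
  define y0 where "y0 = digit (b 1)"
  have y0: "y0 < p" "b 1 = of_nat y0" using digit[OF Suc.prems(1)[of 1]] by (simp_all add: y0_def)
  have dg: "b (q * p + r) = b (q * p) * of_nat (y0 choose r)" if "r < p" for q r
    by (rule coeff_digit_structure[where b = b, OF _ y0(2) that])
      (rule psum_multiplicative_coeff_recursion[OF b Suc.prems(2,3,4)])
  have x: "vge x 1" using vge_mono[OF Suc.prems(6,5)] .
  have "1 * 1 \<le> int p * L" using p_pos Suc.prems(5) by (intro mult_mono) simp_all
  hence IH: "vge (psum (\<lambda>q. b (q * p)) (x ^ p) - (1 + x ^ p) ^ digit_exponent (\<lambda>q. b (q * p)) k)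
               (int (p ^ k) * (int p * L))"
    using Suc.IH[of "\<lambda>q. b (q * p)" "d * p" "int p * L" "x ^ p"] Suc.prems p_pos
      psum_multiplicative_digit_step[OF b dg y0(1) Suc.prems(3) Suc.prems(4) m]
    by (simp add: vge_power Suc_le_eq)
  have "psum b x = (1 + x) ^ y0 * psum (\<lambda>q. b (q * p)) (x ^ p)"
    by (rule psum_digit_factor[OF b dg y0(1) x])
  hence "psum b x - (1 + x) ^ digit_exponent b (Suc k)
        = (1 + x) ^ y0 * (psum (\<lambda>q. b (q * p)) (x ^ p) - (1 + x ^ p) ^ digit_exponent (\<lambda>q. b (q * p)) k)"
    unfolding digit_exponent_Suc y0_def[symmetric]
    by (simp add: power_add power_mult frobenius_add right_diff_distrib)
  moreover have "vge ((1 + x) ^ y0) 0" using vge_mono[OF x] by (intro vge_power0 vge_add) simp_all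
  ultimately show ?case using vge_mult_left0[OF _ IH] by (simp add: mult_ac)
qed

end

section \<open>Elements of \<open>\<Lambda>\<close> are power maps\<close>

lemma Lambda_mult:
  "f \<in> Lambda_set \<Longrightarrow> u \<in> Uone \<Longrightarrow> v \<in> Uone \<Longrightarrow> f (u * v) = f u * f v"
  unfolding Lambda_set_def by blast

lemma Lambda_one_unit: "f \<in> Lambda_set \<Longrightarrow> u \<in> Uone \<Longrightarrow> f u \<in> Uone"
  unfolding Lambda_set_def by blast

lemma Lambda_one:
  assumes f: "f \<in> (Lambda_set :: ('a::field fls \<Rightarrow> 'a fls) set)" shows "f 1 = 1"
proof -
  have U1: "(1::'a fls) \<in> Uone" by (simp add: Uone_iff)
  have "f 1 * 1 = f 1 * f 1" using Lambda_mult[OF f U1 U1] by simp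
  moreover have "f 1 \<noteq> 0" using Lambda_one_unit[OF f U1] one_unit_subdegree(1) by (simp add: Uone_iff)
  ultimately show ?thesis by (metis mult_left_cancel)
qed

lemma Lambda_power:
  assumes f: "f \<in> (Lambda_set :: ('a::field fls \<Rightarrow> 'a fls) set)" and u: "u \<in> Uone"
  shows "f (u ^ n) = f u ^ n"
proof (induction n)
  case (Suc n)
  have "u ^ n \<in> Uone" using one_unit_power u by (simp add: Uone_iff)
  thus ?case using Lambda_mult[OF f u] Suc.IH by simp
qed (simp add: Lambda_one[OF f])

lemma Lambda_expansion_at_one:
  assumes f: "f \<in> (Lambda_set :: ('a::field fls \<Rightarrow> 'a fls) set)"
  obtains \<rho> c where "\<rho> \<noteq> 0" "1 \<le> fls_subdegree \<rho>" "tends0 c"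
    "\<And>t. vge t 0 \<Longrightarrow> series_conv (\<lambda>n. c n * t ^ n) (f (1 + \<rho> * t))"
    "\<And>t. vge t 0 \<Longrightarrow> 1 + \<rho> * t \<in> Uone"
proof -
  have "(1::'a fls) \<in> Uone" by (simp add: Uone_iff)
  then obtain \<rho> where \<rho>: "\<rho> \<in> RK" "\<rho> \<noteq> 0" "ballK 1 \<rho> \<subseteq> Uone" "analytic_on_ball f 1 \<rho>"
    using f unfolding Lambda_set_def locally_analytic_U_def by blast
  then obtain c where c: "tends0 c" "\<And>u. u \<in> ballK 1 \<rho> \<Longrightarrow> series_conv (\<lambda>n. c n * ((u - 1) / \<rho>) ^ n) (f u)"
    unfolding analytic_on_ball_def by blast
  have ball: "1 + \<rho> * t \<in> ballK 1 \<rho>" if "vge t 0" for t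
  proof -
    have "vge (\<rho> * t) (fls_subdegree \<rho>)" using vge_mult[OF _ that, of \<rho>] by (simp add: vge_def)
    moreover have "vge (1 + \<rho> * t) 0" using \<rho>(1) that by (intro vge_add vge_mult_left0) (simp_all add: RK_iff)
    ultimately show ?thesis by (simp add: ballK_def RK_iff)
  qed
  have "1 \<le> fls_subdegree \<rho>"
  proof (rule ccontr)
    assume "\<not> 1 \<le> fls_subdegree \<rho>"
    hence "(0::'a fls) \<in> ballK 1 \<rho>" using \<rho>(1,2) by (simp add: ballK_def RK_iff vge_def)
    thus False using \<rho>(3) by (auto simp: Uone_iff vge_def)
  qed
  moreover have "series_conv (\<lambda>n. c n * t ^ n) (f (1 + \<rho> * t))" if "vge t 0" for t
    using c(2)[OF ball[OF that]] \<rho>(2) by simp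
  ultimately show ?thesis using that \<rho>(2,3) c(1) ball by blast
qed

lemma Lambda_psum_multiplicative:
  assumes f: "f \<in> (Lambda_set :: ('a::field fls \<Rightarrow> 'a fls) set)" and m: "1 \<le> m"
    and fb: "\<And>x. vge x (int m) \<Longrightarrow> f (1 + x) = psum b x"
  shows "psum_multiplicative b 1 m"
  unfolding psum_multiplicative_def
  proof (intro allI impI)
  fix a c :: nat assume "a \<ge> m" "c \<ge> m"
  define x where "x = (fls_X :: 'a fls) ^ (1 * a)"
  define z where "z = (fls_X :: 'a fls) ^ (1 * c)"
  have x: "vge x (int m)" and z: "vge z (int m)"
    using \<open>a \<ge> m\<close> \<open>c \<ge> m\<close> unfolding x_def z_def by (simp_all add: vge_mono[OF vge_X_power])
  have "vge (x * z) (int m)" using vge_mono[OF vge_mult[OF x z]] m by simp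
  hence "vge (x + z + x * z) (int m)" by (rule vge_add[OF vge_add[OF x z]])
  hence w: "vge ((1 + x) * (1 + z) - 1) (int m)" by (simp add: algebra_simps)
  have U: "1 + x \<in> Uone" "1 + z \<in> Uone"
    using vge_mono[OF x] vge_mono[OF z] m by (simp_all add: Uone_iff)
  have "psum b ((1 + x) * (1 + z) - 1) = f ((1 + x) * (1 + z))" using fb[OF w] by simp
  also have "\<dots> = psum b x * psum b z" using Lambda_mult[OF f U] fb[OF x] fb[OF z] by simp
  finally show "psum b ((1 + fls_X ^ (1 * a)) * (1 + fls_X ^ (1 * c)) - 1)
      = psum b (fls_X ^ (1 * a)) * psum b (fls_X ^ (1 * c))"
    unfolding x_def z_def .
qed

context char_p
begin

lemma series_conv_frobenius:
  assumes "series_conv w (s::'a fls)" shows "series_conv (\<lambda>n. w n ^ p) (s ^ p)"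
  unfolding series_conv_def
proof
  fix N
  obtain M where M: "\<forall>m\<ge>M. vge (sum w {..<m} - s) (max N 0)" using assms unfolding series_conv_def by blast
  have "max N 0 \<le> int p * max N 0" using p_pos by (simp add: mult_le_cancel_right1)
  hence "vge ((sum w {..<m} - s) ^ p) N" if "m \<ge> M" for m
    using vge_power[of _ "max N 0" p] M that by (meson max.cobounded1 order_trans vge_mono)
  thus "\<exists>M. \<forall>m\<ge>M. vge (sum (\<lambda>n. w n ^ p) {..<m} - s ^ p) N"
    by (auto simp: frobenius_diff frobenius_sum)
qed

text \<open>Comparing \<open>f(u)^p = f(u^p)\<close> on both sides of the expansion at \<open>1\<close>, with Frobenius on the left.\<close>

lemma Lambda_coeff_frobenius:
  assumes f: "f \<in> (Lambda_set :: ('a fls \<Rightarrow> 'a fls) set)"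
    and \<rho>: "\<rho> \<noteq> 0" "1 \<le> fls_subdegree \<rho>" and c: "tends0 c"
    and ser: "\<And>t. vge t 0 \<Longrightarrow> series_conv (\<lambda>n. c n * t ^ n) (f (1 + \<rho> * t))"
    and inU: "\<And>t. vge t 0 \<Longrightarrow> 1 + \<rho> * t \<in> Uone"
  shows "c n ^ p = c n * (\<rho> ^ (p - 1)) ^ n"
proof -
  define e where "e n = c n ^ p - c n * (\<rho> ^ (p - 1)) ^ n" for n
  have v\<rho>: "vge (\<rho> ^ (p - 1)) 0" using \<rho> by (intro vge_power0) (simp add: vge_def)
  obtain L where L: "\<And>n. vge (c n) L" using tends0_bounded_below[OF c] by blast
  have "vge (e n) (int p * min L 0)" for n
  proof -
    have cn: "vge (c n) (min L 0)" by (rule vge_mono[OF L]) simp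
    have "int p * min L 0 \<le> 1 * min L 0" using p_pos by (intro mult_right_mono_neg) simp_all
    hence "int p * min L 0 \<le> min L 0" by simp
    thus ?thesis unfolding e_def
      by (intro vge_diff vge_power[OF cn] vge_mono[OF vge_mult_right0[OF cn vge_power0[OF v\<rho>]]])
  qed
  moreover have "\<exists>D\<ge>K. series_conv (\<lambda>n. e n * (fls_X ^ D) ^ n) 0" for K
  proof -
    define t where "t = (fls_X :: 'a fls) ^ K"
    define t' where "t' = \<rho> ^ (p - 1) * t ^ p"
    have t0: "vge t 0" unfolding t_def by (rule vge_mono[OF vge_X_power]) simp
    have t: "vge t 0" "vge t' 0" unfolding t'_def by (fact t0, rule vge_mult_left0[OF v\<rho> vge_power0[OF t0]])
    have "\<rho> ^ p = \<rho> * \<rho> ^ (p - 1)" using p_pos by (cases p) simp_all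
    hence "(1 + \<rho> * t) ^ p = 1 + \<rho> * t'"
      by (simp add: frobenius_add t'_def power_mult_distrib mult.assoc)
    hence "f (1 + \<rho> * t') = f (1 + \<rho> * t) ^ p" using Lambda_power[OF f inU[OF t(1)], of p] by simp
    hence "series_conv (\<lambda>n. (c n * t ^ n) ^ p - c n * t' ^ n) 0"
      using series_conv_diff[OF series_conv_frobenius[OF ser[OF t(1)]] ser[OF t(2)]] by simp
    moreover have "(c n * t ^ n) ^ p - c n * t' ^ n = e n * (fls_X ^ (K * p)) ^ n" for n
      unfolding e_def t'_def t_def by (simp add: power_mult_distrib algebra_simps flip: power_mult)
    ultimately show ?thesis using p_pos by (intro exI[of _ "K * p"]) simp
  qed
  ultimately have "e n = 0" by (rule power_series_eq_0)
  thus ?thesis by (simp add: e_def)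
qed

lemma Lambda_local_psum:
  assumes f: "f \<in> (Lambda_set :: ('a fls \<Rightarrow> 'a fls) set)"
  obtains m b where "1 \<le> m" "\<And>n. b n \<in> Fp" "\<And>x. vge x (int m) \<Longrightarrow> f (1 + x) = psum b x"
proof -
  obtain \<rho> c where \<rho>: "\<rho> \<noteq> 0" "1 \<le> fls_subdegree \<rho>" and c: "tends0 c"
    and ser: "\<And>t. vge t 0 \<Longrightarrow> series_conv (\<lambda>n. c n * t ^ n) (f (1 + \<rho> * t))"
    and inU: "\<And>t. vge t 0 \<Longrightarrow> 1 + \<rho> * t \<in> Uone"
    using Lambda_expansion_at_one[OF f] by blast
  define b where "b n = c n / \<rho> ^ n" for n
  have "b n \<in> Fp" for n
  proof (rule in_Fp_if_power_p_eq)
    have "(\<rho> ^ n) ^ p = \<rho> ^ n * (\<rho> ^ (p - 1)) ^ n"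
      using p_pos by (cases p) (simp_all flip: power_mult power_add add: mult.commute)
    thus "b n ^ p = b n"
      using Lambda_coeff_frobenius[OF f \<rho> c ser inU, of n] \<rho>(1) by (simp add: b_def power_divide)
  qed
  moreover have "f (1 + x) = psum b x" if x: "vge x (fls_subdegree \<rho>)" for x
  proof -
    have "vge (x / \<rho>) 0"
      using x \<rho>(1) by (cases "x = 0") (simp_all add: vge_def divide_inverse)
    from ser[OF this] have "series_conv (\<lambda>n. b n * x ^ n) (f (1 + x))"
      using \<rho>(1) by (simp add: b_def power_divide)
    thus ?thesis by (rule psum_eqI[symmetric])
  qed
  moreover have "1 \<le> nat (fls_subdegree \<rho>)" "int (nat (fls_subdegree \<rho>)) = fls_subdegree \<rho>"
    using \<rho>(2) by simp_all
  ultimately show ?thesis using that by metis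
qed

lemma Lambda_eq_upow_near_one:
  assumes f: "f \<in> (Lambda_set :: ('a fls \<Rightarrow> 'a fls) set)"
  obtains y m where "y \<in> Zp p" "\<And>u. vge (u - 1) (int m) \<Longrightarrow> f u = upow p y u"
proof -
  obtain m b where m: "1 \<le> m" and b: "\<And>n. b n \<in> Fp" and fb: "\<And>x. vge x (int m) \<Longrightarrow> f (1 + x) = psum b x"
    using Lambda_local_psum[OF f] by blast
  have "b 0 = 1" using fb[of 0] Lambda_one[OF f] psum_at_0[of b] by simp
  moreover have "psum_multiplicative b 1 m" by (rule Lambda_psum_multiplicative[OF f m fb])
  ultimately have descent: "vge (psum b x - (1 + x) ^ digit_exponent b k) (int (p ^ k) * int m)"
    if "vge x (int m)" for x k
    using psum_descent[OF m b] that m by simp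
  define y where "y k = int (digit_exponent b k)" for k
  have y: "y \<in> Zp p" unfolding y_def by (rule digit_exponent_in_Zp[OF b])
  have "f u = upow p y u" if u: "vge (u - 1) (int m)" for u
  proof (rule eq_if_vge_diff)
    fix k
    have u1: "vge (u - 1) 1" using vge_mono[OF u] m by simp
    have "k \<le> p ^ k * m" using less_p_power[of k] mult_le_mono2[OF m, of "p ^ k"] by linarith
    hence "int k \<le> int (p ^ k) * int m" by (metis of_nat_mono of_nat_mult)
    moreover have "vge (f u - u ^ digit_exponent b k) (int (p ^ k) * int m)"
      using descent[OF u, of k] fb[OF u] by simp
    ultimately have "vge (f u - u ^ nat (y k)) (int k)" by (simp add: y_def vge_mono)
    moreover have "vge (u ^ nat (y k) - upow p y u) (int k)"
      by (rule iffD1[OF vge_diff_commute upow_approx[OF y u1]])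
    ultimately show "vge (f u - upow p y u) (int k)" by (rule vge_diff_trans)
  qed
  thus ?thesis using that y by blast
qed

lemma eq_on_Uone_if_eq_near_one:
  fixes f g :: "'a fls \<Rightarrow> 'a fls"
  assumes f: "\<And>u. u \<in> Uone \<Longrightarrow> f (u ^ (p ^ k)) = f u ^ (p ^ k)"
    and g: "\<And>u. u \<in> Uone \<Longrightarrow> g (u ^ (p ^ k)) = g u ^ (p ^ k)"
    and near: "\<And>u. vge (u - 1) (int (p ^ k)) \<Longrightarrow> f u = g u"
    and u: "u \<in> Uone"
  shows "f u = g u"
proof -
  have "vge (u ^ (p ^ k) - 1) (int (p ^ k))" using one_unit_power_p_power u by (simp add: Uone_iff)
  hence "f u ^ (p ^ k) = g u ^ (p ^ k)" using near f[OF u] g[OF u] by simp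
  hence "(f u - g u) ^ (p ^ k) = 0" by (simp add: frobenius_power_diff)
  thus ?thesis by simp
qed

lemma Lambda_surj:
  assumes f: "f \<in> (Lambda_set :: ('a fls \<Rightarrow> 'a fls) set)"
  shows "\<exists>y\<in>Zp p. f = restrict (upow p y) Uone"
proof -
  obtain y m where y: "y \<in> Zp p" and near: "\<And>u. vge (u - 1) (int m) \<Longrightarrow> f u = upow p y u"
    using Lambda_eq_upow_near_one[OF f] by blast
  have "int m \<le> int (p ^ m)" using less_p_power[of m] by simp
  have "f u = upow p y u" if "u \<in> Uone" for u
  proof (rule eq_on_Uone_if_eq_near_one[where k = m, OF _ _ _ that])
    show "f (v ^ p ^ m) = f v ^ p ^ m" if "v \<in> Uone" for v by (rule Lambda_power[OF f that])
    show "upow p y (v ^ p ^ m) = upow p y v ^ p ^ m" if "v \<in> Uone" for v :: "'a fls"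
      using upow_power[OF y] that by (simp add: Uone_iff)
    show "f v = upow p y v" if "vge (v - 1) (int (p ^ m))" for v
      using near vge_mono[OF that \<open>int m \<le> int (p ^ m)\<close>] .
  qed
  moreover have "f \<in> extensional Uone" using f by (simp add: Lambda_set_def)
  ultimately have "f = restrict (upow p y) Uone" by (auto simp: extensional_def)
  thus ?thesis using y by blast
qed

end

section \<open>The isomorphism\<close>

context char_p
begin

lemma restrict_upow_add:
  assumes "y \<in> Zp p" "z \<in> Zp p"
  shows "restrict (upow p (\<lambda>n. (y n + z n) mod int p ^ n)) Uone
         = restrict (\<lambda>u. restrict (upow p y) Uone u * restrict (upow p z) Uone u) (Uone :: 'a fls set)"
  using upow_add[OF assms] by (auto simp: Uone_iff fun_eq_iff)

lemma restrict_upow_zero: "restrict (upow p (\<lambda>n. 0)) Uone = restrict (\<lambda>u. 1) (Uone :: 'a fls set)"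
  using upow_zero by (auto simp: Uone_iff fun_eq_iff)

lemma Lambda_group: "group (Lambda_grp :: ('a fls \<Rightarrow> 'a fls) monoid)"
proof (rule groupI)
  fix f g :: "'a fls \<Rightarrow> 'a fls" assume "f \<in> carrier Lambda_grp" "g \<in> carrier Lambda_grp"
  then obtain y z where "y \<in> Zp p" "z \<in> Zp p" "f = restrict (upow p y) Uone" "g = restrict (upow p z) Uone"
    using Lambda_surj[of f] Lambda_surj[of g] by (auto simp: Lambda_grp_def)
  thus "f \<otimes>\<^bsub>Lambda_grp\<^esub> g \<in> carrier (Lambda_grp :: ('a fls \<Rightarrow> 'a fls) monoid)"
    using upow_in_Lambda[OF Zp_add_closed[OF p_pos]] restrict_upow_add by (simp add: Lambda_grp_def)
next
  show "\<one>\<^bsub>Lambda_grp\<^esub> \<in> carrier (Lambda_grp :: ('a fls \<Rightarrow> 'a fls) monoid)"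
    using upow_in_Lambda[OF zero_in_Zp[OF p_pos]] restrict_upow_zero by (simp add: Lambda_grp_def)
next
  fix f :: "'a fls \<Rightarrow> 'a fls" assume f: "f \<in> carrier Lambda_grp"
  then obtain y where y: "y \<in> Zp p" "f = restrict (upow p y) Uone"
    using Lambda_surj[of f] by (auto simp: Lambda_grp_def)
  show "\<one>\<^bsub>Lambda_grp\<^esub> \<otimes>\<^bsub>Lambda_grp\<^esub> f = f" using y(2) by (simp add: Lambda_grp_def fun_eq_iff)
  define y' where "y' n = (- y n) mod int p ^ n" for n
  have y': "y' \<in> Zp p" unfolding y'_def by (rule Zp_uminus_closed[OF p_pos y(1)])
  have "(\<lambda>n. (y' n + y n) mod int p ^ n) = (\<lambda>n. 0)"
    by (simp add: y'_def fun_eq_iff mod_add_left_eq)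
  hence "restrict (upow p y') Uone \<otimes>\<^bsub>Lambda_grp\<^esub> f = \<one>\<^bsub>Lambda_grp\<^esub>"
    using restrict_upow_add[OF y' y(1)] restrict_upow_zero y(2) by (simp add: Lambda_grp_def)
  moreover have "restrict (upow p y') Uone \<in> carrier (Lambda_grp :: ('a fls \<Rightarrow> 'a fls) monoid)"
    using upow_in_Lambda[OF y'] by (simp add: Lambda_grp_def)
  ultimately show "\<exists>g\<in>carrier Lambda_grp. g \<otimes>\<^bsub>Lambda_grp\<^esub> f = \<one>\<^bsub>Lambda_grp\<^esub>" by blast
qed (simp add: Lambda_grp_def fun_eq_iff mult.assoc)

lemma upow_iso:
  "(\<lambda>y \<in> Zp p. restrict (\<lambda>u. upow p y u :: 'a fls) Uone) \<in> iso (Zp_grp p) Lambda_grp"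
proof (rule isoI)
  show "(\<lambda>y \<in> Zp p. restrict (\<lambda>u. upow p y u :: 'a fls) Uone) \<in> hom (Zp_grp p) Lambda_grp"
    using upow_in_Lambda restrict_upow_add Zp_add_closed[OF p_pos]
    by (intro homI) (auto simp: Zp_grp_def Lambda_grp_def)
  have "inj_on (\<lambda>y \<in> Zp p. restrict (\<lambda>u. upow p y u :: 'a fls) Uone) (Zp p)"
  proof (rule inj_onI)
    fix y z assume "y \<in> Zp p" "z \<in> Zp p"
      and "(\<lambda>y \<in> Zp p. restrict (\<lambda>u. upow p y u :: 'a fls) Uone) y
           = (\<lambda>y \<in> Zp p. restrict (\<lambda>u. upow p y u :: 'a fls) Uone) z"
    moreover have "(1 + fls_X :: 'a fls) \<in> Uone" by (simp add: Uone_iff)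
    ultimately show "y = z" by (intro upow_inj) (auto dest: fun_cong[of _ _ "1 + fls_X"])
  qed
  moreover have "(\<lambda>y \<in> Zp p. restrict (\<lambda>u. upow p y u :: 'a fls) Uone) ` Zp p = Lambda_set"
    using upow_in_Lambda Lambda_surj by (auto simp: image_iff)
  ultimately show "bij_betw (\<lambda>y \<in> Zp p. restrict (\<lambda>u. upow p y u :: 'a fls) Uone)
      (carrier (Zp_grp p)) (carrier Lambda_grp)"
    by (simp add: bij_betw_def Zp_grp_def Lambda_grp_def)
qed

end

theorem theorem1p1:
  fixes p :: nat
  assumes "prime p" and "of_nat p = (0 :: 'a :: {field, finite})"
  shows "group (Zp_grp p) \<and> group (Lambda_grp :: ('a fls \<Rightarrow> 'a fls) monoid) \<and>
         (\<lambda>y \<in> Zp p. restrict (\<lambda>u. upow p y u :: 'a fls) Uone)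
           \<in> iso (Zp_grp p) (Lambda_grp :: ('a fls \<Rightarrow> 'a fls) monoid)"
proof -
  interpret char_p p "TYPE('a)" by unfold_locales (rule assms)+
  show ?thesis using Zp_group[OF p_pos] Lambda_group upow_iso by blast
qed

end
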